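(* Let $(!, \delta, \varepsilon, \mathsf{m}, \mathsf{m}_K)$ be a symmetric monoidal comonad on a symmetric monoidal category $(\mathbb{X}, \otimes, K)$. Then the following are in bijective correspondence: (1) Cocommutative bimonoids in $(\mathbb{X}^!, \otimes^\mathsf{m}, (K, \mathsf{m}_K))$; (2) Cocommutative bimonoids $(A, \nabla, \mathsf{u}, \Delta, \mathsf{e})$ in $(\mathbb{X}, \otimes, K)$ equipped with a natural transformation $\lambda_X: A \otimes !(X) \to !(A \otimes X)$ such that $\lambda$ is a symmetric monoidal mixed distributive law of the symmetric comonoidal monad $(A \otimes -, \mu^\nabla, \eta^\mathsf{u}, \mathsf{n}^\Delta, \mathsf{n}^\mathsf{e}_K)$ over $(!, \delta, \varepsilon, \mathsf{m}, \mathsf{m}_K)$ and $\alpha_{A,!(X),!(Y)};(\lambda_X\otimes 1_{!(Y)});\mathsf{m}_{A\otimes X,Y} = (1_A\otimes \mathsf{m}_{X,Y});\lambda_{X\otimes Y};!(\alpha_{A,X,Y})$ as maps $A\otimes(!(X)\otimes !(Y))\to !((A\otimes X)\otimes Y)$.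
   Context: Composition is in diagrammatic order ($f;g$ = first $f$ then $g$); $\alpha,\ell,\rho,\sigma$ are the associator, left/right unitors and symmetry, and $\tau_{A,B,C,D}:(A\otimes B)\otimes(C\otimes D)\to(A\otimes C)\otimes(B\otimes D)$ is the canonical interchange isomorphism. A symmetric monoidal comonad $(!,\delta,\varepsilon,\mathsf{m},\mathsf{m}_K)$ is a comonad with symmetric lax monoidal structure $\mathsf{m}_{A,B}:!(A)\otimes!(B)\to!(A\otimes B)$, $\mathsf{m}_K:K\to!(K)$ for which $\delta,\varepsilon$ are monoidal; its Eilenberg-Moore category $\mathbb{X}^!$ of $!$-coalgebras is symmetric monoidal with $(A,\omega)\otimes^\mathsf{m}(B,\omega')=(A\otimes B,(\omega\otimes\omega');\mathsf{m}_{A,B})$ and unit $(K,\mathsf{m}_K)$. For a cocommutative bimonoid $(A,\nabla,\mathsf{u},\Delta,\mathsf{e})$ the symmetric comonoidal monad $A\otimes-$ has $\mu^\nabla_X=\alpha_{A,A,X};(\nabla\otimes 1_X)$, $\eta^\mathsf{u}_X=\ell^{-1}_X;(\mathsf{u}\otimes 1_X)$, $\mathsf{n}^\Delta_{X,Y}=(\Delta\otimes 1_{X\otimes Y});\tau_{A,A,X,Y}$, $\mathsf{n}^\mathsf{e}_K=\rho_A;\mathsf{e}$. A mixed distributive law of a monad $(\mathsf{T},\mu,\eta)$ over $(!,\delta,\varepsilon)$ is a natural $\lambda_X:\mathsf{T}!(X)\to!\mathsf{T}(X)$ with $\mu_{!(X)};\lambda_X=\mathsf{T}(\lambda_X);\lambda_{\mathsf{T}(X)};!(\mu_X)$,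 $\eta_{!(X)};\lambda_X=!(\eta_X)$, $\mathsf{T}(\delta_X);\lambda_{!(X)};!(\lambda_X)=\lambda_X;\delta_{\mathsf{T}(X)}$, $\lambda_X;\varepsilon_{\mathsf{T}(X)}=\mathsf{T}(\varepsilon_X)$; for a symmetric comonoidal monad $(\mathsf{T},\mu,\eta,\mathsf{n},\mathsf{n}_K)$ it is symmetric monoidal if also $\mathsf{n}_{!(X),!(Y)};(\lambda_X\otimes\lambda_Y);\mathsf{m}_{\mathsf{T}(X),\mathsf{T}(Y)}=\mathsf{T}(\mathsf{m}_{X,Y});\lambda_{X\otimes Y};!(\mathsf{n}_{X,Y})$ and $\mathsf{n}_K;\mathsf{m}_K=\mathsf{T}(\mathsf{m}_K);\lambda_K;!(\mathsf{n}_K)$. *)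

theory Defs
  imports Main
begin

section \<open>Symmetric monoidal categories (composition in diagrammatic order)\<close>

text \<open>Conventions (as in the paper): Cmp C f g is f;g (first f then g);
  Asc C A B D : A(BD) -> (AB)D;  LUn C X : K X -> X;  RUn C X : X K -> X;
  Swp C X Y : X Y -> Y X.\<close>

record ('o,'a) smcat =
  Obj  :: "'o set"
  Arr  :: "'a set"
  Src  :: "'a \<Rightarrow> 'o"
  Tgt  :: "'a \<Rightarrow> 'o"
  Idm  :: "'o \<Rightarrow> 'a"
  Cmp  :: "'a \<Rightarrow> 'a \<Rightarrow> 'a"
  TOb  :: "'o \<Rightarrow> 'o \<Rightarrow> 'o"
  TAr  :: "'a \<Rightarrow> 'a \<Rightarrow> 'a"
  Unt  :: "'o"
  Asc  :: "'o \<Rightarrow> 'o \<Rightarrow> 'o \<Rightarrow> 'a"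
  LUn  :: "'o \<Rightarrow> 'a"
  RUn  :: "'o \<Rightarrow> 'a"
  Swp  :: "'o \<Rightarrow> 'o \<Rightarrow> 'a"

definition Hom :: "('o,'a,'c) smcat_scheme \<Rightarrow> 'o \<Rightarrow> 'o \<Rightarrow> 'a set" where
  "Hom C X Y = {f \<in> Arr C. Src C f = X \<and> Tgt C f = Y}"

definition is_category :: "('o,'a,'c) smcat_scheme \<Rightarrow> bool" where
  "is_category C \<longleftrightarrow>
    (\<forall>f\<in>Arr C. Src C f \<in> Obj C \<and> Tgt C f \<in> Obj C) \<and>
    (\<forall>X\<in>Obj C. Idm C X \<in> Hom C X X) \<and>
    (\<forall>f\<in>Arr C. \<forall>g\<in>Arr C. Tgt C f = Src C g \<longrightarrow> Cmp C f g \<in> Hom C (Src C f) (Tgt C g)) \<and>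
    (\<forall>f\<in>Arr C. Cmp C (Idm C (Src C f)) f = f \<and> Cmp C f (Idm C (Tgt C f)) = f) \<and>
    (\<forall>f\<in>Arr C. \<forall>g\<in>Arr C. \<forall>h\<in>Arr C. Tgt C f = Src C g \<longrightarrow> Tgt C g = Src C h \<longrightarrow>
        Cmp C (Cmp C f g) h = Cmp C f (Cmp C g h))"

definition is_iso :: "('o,'a,'c) smcat_scheme \<Rightarrow> 'a \<Rightarrow> bool" where
  "is_iso C f \<longleftrightarrow> f \<in> Arr C \<and>
     (\<exists>g\<in>Hom C (Tgt C f) (Src C f). Cmp C f g = Idm C (Src C f) \<and> Cmp C g f = Idm C (Tgt C f))"

definition Inv :: "('o,'a,'c) smcat_scheme \<Rightarrow> 'a \<Rightarrow> 'a" where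
  "Inv C f = (THE g. g \<in> Hom C (Tgt C f) (Src C f) \<and> Cmp C f g = Idm C (Src C f) \<and> Cmp C g f = Idm C (Tgt C f))"

definition is_smc :: "('o,'a,'c) smcat_scheme \<Rightarrow> bool" where
  "is_smc C \<longleftrightarrow> is_category C \<and> Unt C \<in> Obj C \<and>
    \<comment> \<open>tensor is a bifunctor\<close>
    (\<forall>X\<in>Obj C. \<forall>Y\<in>Obj C. TOb C X Y \<in> Obj C) \<and>
    (\<forall>f\<in>Arr C. \<forall>g\<in>Arr C. TAr C f g \<in> Hom C (TOb C (Src C f) (Src C g)) (TOb C (Tgt C f) (Tgt C g))) \<and>
    (\<forall>X\<in>Obj C. \<forall>Y\<in>Obj C. TAr C (Idm C X) (Idm C Y) = Idm C (TOb C X Y)) \<and>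
    (\<forall>f\<in>Arr C. \<forall>g\<in>Arr C. \<forall>f'\<in>Arr C. \<forall>g'\<in>Arr C. Tgt C f = Src C g \<longrightarrow> Tgt C f' = Src C g' \<longrightarrow>
        TAr C (Cmp C f g) (Cmp C f' g') = Cmp C (TAr C f f') (TAr C g g')) \<and>
    \<comment> \<open>associator  A(BD) -> (AB)D, natural isomorphism\<close>
    (\<forall>X\<in>Obj C. \<forall>Y\<in>Obj C. \<forall>Z\<in>Obj C.
        Asc C X Y Z \<in> Hom C (TOb C X (TOb C Y Z)) (TOb C (TOb C X Y) Z) \<and> is_iso C (Asc C X Y Z)) \<and>
    (\<forall>f\<in>Arr C. \<forall>g\<in>Arr C. \<forall>h\<in>Arr C.
        Cmp C (TAr C f (TAr C g h)) (Asc C (Tgt C f) (Tgt C g) (Tgt C h))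
      = Cmp C (Asc C (Src C f) (Src C g) (Src C h)) (TAr C (TAr C f g) h)) \<and>
    \<comment> \<open>left unitor  K X -> X\<close>
    (\<forall>X\<in>Obj C. LUn C X \<in> Hom C (TOb C (Unt C) X) X \<and> is_iso C (LUn C X)) \<and>
    (\<forall>f\<in>Arr C. Cmp C (TAr C (Idm C (Unt C)) f) (LUn C (Tgt C f)) = Cmp C (LUn C (Src C f)) f) \<and>
    \<comment> \<open>right unitor  X K -> X\<close>
    (\<forall>X\<in>Obj C. RUn C X \<in> Hom C (TOb C X (Unt C)) X \<and> is_iso C (RUn C X)) \<and>
    (\<forall>f\<in>Arr C. Cmp C (TAr C f (Idm C (Unt C))) (RUn C (Tgt C f)) = Cmp C (RUn C (Src C f)) f) \<and>
    \<comment> \<open>symmetry\<close>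
    (\<forall>X\<in>Obj C. \<forall>Y\<in>Obj C. Swp C X Y \<in> Hom C (TOb C X Y) (TOb C Y X) \<and>
        Cmp C (Swp C X Y) (Swp C Y X) = Idm C (TOb C X Y)) \<and>
    (\<forall>f\<in>Arr C. \<forall>g\<in>Arr C.
        Cmp C (TAr C f g) (Swp C (Tgt C f) (Tgt C g)) = Cmp C (Swp C (Src C f) (Src C g)) (TAr C g f)) \<and>
    \<comment> \<open>pentagon\<close>
    (\<forall>A\<in>Obj C. \<forall>B\<in>Obj C. \<forall>D\<in>Obj C. \<forall>E\<in>Obj C.
        Cmp C (Asc C A B (TOb C D E)) (Asc C (TOb C A B) D E)
      = Cmp C (Cmp C (TAr C (Idm C A) (Asc C B D E)) (Asc C A (TOb C B D) E)) (TAr C (Asc C A B D) (Idm C E))) \<and>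
    \<comment> \<open>triangle\<close>
    (\<forall>A\<in>Obj C. \<forall>B\<in>Obj C.
        Cmp C (Asc C A (Unt C) B) (TAr C (RUn C A) (Idm C B)) = TAr C (Idm C A) (LUn C B)) \<and>
    \<comment> \<open>hexagon\<close>
    (\<forall>A\<in>Obj C. \<forall>B\<in>Obj C. \<forall>D\<in>Obj C.
        Cmp C (Cmp C (Asc C A B D) (Swp C (TOb C A B) D)) (Asc C D A B)
      = Cmp C (Cmp C (TAr C (Idm C A) (Swp C B D)) (Asc C A D B)) (TAr C (Swp C A D) (Idm C B)))"

text \<open>Canonical interchange  tau : (AB)(CD) -> (AC)(BD).\<close>
definition Tau :: "('o,'a,'c) smcat_scheme \<Rightarrow> 'o \<Rightarrow> 'o \<Rightarrow> 'o \<Rightarrow> 'o \<Rightarrow> 'a" where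
  "Tau C A B D E =
     Cmp C (Inv C (Asc C A B (TOb C D E)))
    (Cmp C (TAr C (Idm C A) (Asc C B D E))
    (Cmp C (TAr C (Idm C A) (TAr C (Swp C B D) (Idm C E)))
    (Cmp C (TAr C (Idm C A) (Inv C (Asc C D B E)))
           (Asc C A D (TOb C B E)))))"

record ('o,'a) smcomonad =
  BOb :: "'o \<Rightarrow> 'o"     \<comment> \<open>! on objects\<close>
  BAr :: "'a \<Rightarrow> 'a"     \<comment> \<open>! on arrows\<close>
  Dl  :: "'o \<Rightarrow> 'a"
  Ep  :: "'o \<Rightarrow> 'a"
  Mm  :: "'o \<Rightarrow> 'o \<Rightarrow> 'a"  \<comment> \<open>m_{X,Y} : !X !Y -> !(XY)\<close>
  MK  :: "'a"             \<comment> \<open>m_K : K -> !K\<close>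

definition is_sm_comonad :: "('o,'a,'c) smcat_scheme \<Rightarrow> ('o,'a,'d) smcomonad_scheme \<Rightarrow> bool" where
  "is_sm_comonad C B \<longleftrightarrow>
    \<comment> \<open>functor\<close>
    (\<forall>X\<in>Obj C. BOb B X \<in> Obj C) \<and>
    (\<forall>f\<in>Arr C. BAr B f \<in> Hom C (BOb B (Src C f)) (BOb B (Tgt C f))) \<and>
    (\<forall>X\<in>Obj C. BAr B (Idm C X) = Idm C (BOb B X)) \<and>
    (\<forall>f\<in>Arr C. \<forall>g\<in>Arr C. Tgt C f = Src C g \<longrightarrow> BAr B (Cmp C f g) = Cmp C (BAr B f) (BAr B g)) \<and>
    \<comment> \<open>delta, epsilon natural\<close>
    (\<forall>X\<in>Obj C. Dl B X \<in> Hom C (BOb B X) (BOb B (BOb B X)) \<and> Ep B X \<in> Hom C (BOb B X) X) \<and>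
    (\<forall>f\<in>Arr C. Cmp C (BAr B f) (Dl B (Tgt C f)) = Cmp C (Dl B (Src C f)) (BAr B (BAr B f))) \<and>
    (\<forall>f\<in>Arr C. Cmp C (BAr B f) (Ep B (Tgt C f)) = Cmp C (Ep B (Src C f)) f) \<and>
    \<comment> \<open>comonad laws\<close>
    (\<forall>X\<in>Obj C. Cmp C (Dl B X) (Ep B (BOb B X)) = Idm C (BOb B X) \<and>
                Cmp C (Dl B X) (BAr B (Ep B X)) = Idm C (BOb B X) \<and>
                Cmp C (Dl B X) (Dl B (BOb B X)) = Cmp C (Dl B X) (BAr B (Dl B X))) \<and>
    \<comment> \<open>lax monoidal structure\<close>
    (\<forall>X\<in>Obj C. \<forall>Y\<in>Obj C. Mm B X Y \<in> Hom C (TOb C (BOb B X) (BOb B Y)) (BOb B (TOb C X Y))) \<and>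
    MK B \<in> Hom C (Unt C) (BOb B (Unt C)) \<and>
    (\<forall>f\<in>Arr C. \<forall>g\<in>Arr C.
        Cmp C (TAr C (BAr B f) (BAr B g)) (Mm B (Tgt C f) (Tgt C g))
      = Cmp C (Mm B (Src C f) (Src C g)) (BAr B (TAr C f g))) \<and>
    (\<forall>X\<in>Obj C. \<forall>Y\<in>Obj C. \<forall>Z\<in>Obj C.
        Cmp C (Cmp C (TAr C (Idm C (BOb B X)) (Mm B Y Z)) (Mm B X (TOb C Y Z))) (BAr B (Asc C X Y Z))
      = Cmp C (Cmp C (Asc C (BOb B X) (BOb B Y) (BOb B Z)) (TAr C (Mm B X Y) (Idm C (BOb B Z)))) (Mm B (TOb C X Y) Z)) \<and>
    (\<forall>X\<in>Obj C.
        Cmp C (Cmp C (TAr C (MK B) (Idm C (BOb B X))) (Mm B (Unt C) X)) (BAr B (LUn C X)) = LUn C (BOb B X) \<and>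
        Cmp C (Cmp C (TAr C (Idm C (BOb B X)) (MK B)) (Mm B X (Unt C))) (BAr B (RUn C X)) = RUn C (BOb B X)) \<and>
    \<comment> \<open>symmetric\<close>
    (\<forall>X\<in>Obj C. \<forall>Y\<in>Obj C.
        Cmp C (Mm B X Y) (BAr B (Swp C X Y)) = Cmp C (Swp C (BOb B X) (BOb B Y)) (Mm B Y X)) \<and>
    \<comment> \<open>delta and epsilon are monoidal\<close>
    (\<forall>X\<in>Obj C. \<forall>Y\<in>Obj C.
        Cmp C (Mm B X Y) (Dl B (TOb C X Y))
      = Cmp C (Cmp C (TAr C (Dl B X) (Dl B Y)) (Mm B (BOb B X) (BOb B Y))) (BAr B (Mm B X Y)) \<and>
        Cmp C (Mm B X Y) (Ep B (TOb C X Y)) = TAr C (Ep B X) (Ep B Y)) \<and>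
    Cmp C (MK B) (Dl B (Unt C)) = Cmp C (MK B) (BAr B (MK B)) \<and>
    Cmp C (MK B) (Ep B (Unt C)) = Idm C (Unt C)"

section \<open>Coalgebras (objects of the Eilenberg-Moore category)\<close>

definition is_coalg :: "('o,'a,'c) smcat_scheme \<Rightarrow> ('o,'a,'d) smcomonad_scheme \<Rightarrow> 'o \<Rightarrow> 'a \<Rightarrow> bool" where
  "is_coalg C B A w \<longleftrightarrow> A \<in> Obj C \<and> w \<in> Hom C A (BOb B A) \<and>
     Cmp C w (Ep B A) = Idm C A \<and> Cmp C w (Dl B A) = Cmp C w (BAr B w)"

definition is_coalg_mor :: "('o,'a,'c) smcat_scheme \<Rightarrow> ('o,'a,'d) smcomonad_scheme \<Rightarrow>
     'o \<Rightarrow> 'a \<Rightarrow> 'o \<Rightarrow> 'a \<Rightarrow> 'a \<Rightarrow> bool" where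
  "is_coalg_mor C B A w A' w' f \<longleftrightarrow> f \<in> Hom C A A' \<and> Cmp C f w' = Cmp C w (BAr B f)"

definition tcoalg :: "('o,'a,'c) smcat_scheme \<Rightarrow> ('o,'a,'d) smcomonad_scheme \<Rightarrow> 'o \<Rightarrow> 'a \<Rightarrow> 'o \<Rightarrow> 'a \<Rightarrow> 'a" where
  "tcoalg C B A w A' w' = Cmp C (TAr C w w') (Mm B A A')"

definition is_bimonoid :: "('o,'a,'c) smcat_scheme \<Rightarrow> 'o \<Rightarrow> 'a \<Rightarrow> 'a \<Rightarrow> 'a \<Rightarrow> 'a \<Rightarrow> bool" where
  "is_bimonoid C A mu u d e \<longleftrightarrow> A \<in> Obj C \<and>
    mu \<in> Hom C (TOb C A A) A \<and> u \<in> Hom C (Unt C) A \<and>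
    d \<in> Hom C A (TOb C A A) \<and> e \<in> Hom C A (Unt C) \<and>
    \<comment> \<open>monoid\<close>
    Cmp C (Cmp C (Asc C A A A) (TAr C mu (Idm C A))) mu = Cmp C (TAr C (Idm C A) mu) mu \<and>
    Cmp C (TAr C u (Idm C A)) mu = LUn C A \<and>
    Cmp C (TAr C (Idm C A) u) mu = RUn C A \<and>
    \<comment> \<open>comonoid\<close>
    Cmp C (Cmp C d (TAr C (Idm C A) d)) (Asc C A A A) = Cmp C d (TAr C d (Idm C A)) \<and>
    Cmp C (Cmp C d (TAr C e (Idm C A))) (LUn C A) = Idm C A \<and>
    Cmp C (Cmp C d (TAr C (Idm C A) e)) (RUn C A) = Idm C A \<and>
    \<comment> \<open>compatibility\<close>
    Cmp C mu d = Cmp C (Cmp C (TAr C d d) (Tau C A A A A)) (TAr C mu mu) \<and>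
    Cmp C u d = Cmp C (Inv C (LUn C (Unt C))) (TAr C u u) \<and>
    Cmp C mu e = Cmp C (TAr C e e) (LUn C (Unt C)) \<and>
    Cmp C u e = Idm C (Unt C)"

definition is_cocomm_bimonoid :: "('o,'a,'c) smcat_scheme \<Rightarrow> 'o \<Rightarrow> 'a \<Rightarrow> 'a \<Rightarrow> 'a \<Rightarrow> 'a \<Rightarrow> bool" where
  "is_cocomm_bimonoid C A mu u d e \<longleftrightarrow>
     is_bimonoid C A mu u d e \<and> Cmp C d (Swp C A A) = d"

text \<open>A cocommutative bimonoid in the symmetric monoidal category of !-coalgebras
  (X^!, (x)^m, (K, m_K)) whose underlying object is the coalgebra (A,w).  Since
  composition, tensor and all structure maps of X^! are those of X, this is a
  cocommutative bimonoid in X whose four structure maps are coalgebra morphisms.\<close>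
definition is_EM_cocomm_bimonoid :: "('o,'a,'c) smcat_scheme \<Rightarrow> ('o,'a,'d) smcomonad_scheme \<Rightarrow>
     'o \<Rightarrow> 'a \<Rightarrow> 'a \<Rightarrow> 'a \<Rightarrow> 'a \<Rightarrow> 'a \<Rightarrow> bool" where
  "is_EM_cocomm_bimonoid C B A w mu u d e \<longleftrightarrow>
     is_coalg C B A w \<and> is_cocomm_bimonoid C A mu u d e \<and>
     is_coalg_mor C B (TOb C A A) (tcoalg C B A w A w) A w mu \<and>
     is_coalg_mor C B (Unt C) (MK B) A w u \<and>
     is_coalg_mor C B A w (TOb C A A) (tcoalg C B A w A w) d \<and>
     is_coalg_mor C B A w (Unt C) (MK B) e"

section \<open>The symmetric comonoidal monad A (x) - and mixed distributive laws\<close>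

definition muA :: "('o,'a,'c) smcat_scheme \<Rightarrow> 'o \<Rightarrow> 'a \<Rightarrow> 'o \<Rightarrow> 'a" where
  "muA C A mu X = Cmp C (Asc C A A X) (TAr C mu (Idm C X))"

definition etaA :: "('o,'a,'c) smcat_scheme \<Rightarrow> 'a \<Rightarrow> 'o \<Rightarrow> 'a" where
  "etaA C u X = Cmp C (Inv C (LUn C X)) (TAr C u (Idm C X))"

definition nA :: "('o,'a,'c) smcat_scheme \<Rightarrow> 'o \<Rightarrow> 'a \<Rightarrow> 'o \<Rightarrow> 'o \<Rightarrow> 'a" where
  "nA C A d X Y = Cmp C (TAr C d (Idm C (TOb C X Y))) (Tau C A A X Y)"

definition nKA :: "('o,'a,'c) smcat_scheme \<Rightarrow> 'o \<Rightarrow> 'a \<Rightarrow> 'a" where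
  "nKA C A e = Cmp C (RUn C A) e"

text \<open>Outside the objects, lam is required to be undefined (so that lam is determined by its
  components).\<close>
definition is_good_lambda :: "('o,'a,'c) smcat_scheme \<Rightarrow> ('o,'a,'d) smcomonad_scheme \<Rightarrow>
     'o \<Rightarrow> 'a \<Rightarrow> 'a \<Rightarrow> 'a \<Rightarrow> 'a \<Rightarrow> ('o \<Rightarrow> 'a) \<Rightarrow> bool" where
  "is_good_lambda C B A mu u d e lam \<longleftrightarrow>
    (\<forall>X. X \<notin> Obj C \<longrightarrow> lam X = undefined) \<and>
    \<comment> \<open>natural transformation\<close>
    (\<forall>X\<in>Obj C. lam X \<in> Hom C (TOb C A (BOb B X)) (BOb B (TOb C A X))) \<and>
    (\<forall>f\<in>Arr C. Cmp C (TAr C (Idm C A) (BAr B f)) (lam (Tgt C f))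
              = Cmp C (lam (Src C f)) (BAr B (TAr C (Idm C A) f))) \<and>
    \<comment> \<open>mixed distributive law\<close>
    (\<forall>X\<in>Obj C.
       Cmp C (muA C A mu (BOb B X)) (lam X)
         = Cmp C (Cmp C (TAr C (Idm C A) (lam X)) (lam (TOb C A X))) (BAr B (muA C A mu X)) \<and>
       Cmp C (etaA C u (BOb B X)) (lam X) = BAr B (etaA C u X) \<and>
       Cmp C (Cmp C (TAr C (Idm C A) (Dl B X)) (lam (BOb B X))) (BAr B (lam X))
         = Cmp C (lam X) (Dl B (TOb C A X)) \<and>
       Cmp C (lam X) (Ep B (TOb C A X)) = TAr C (Idm C A) (Ep B X)) \<and>
    \<comment> \<open>symmetric monoidal\<close>
    (\<forall>X\<in>Obj C. \<forall>Y\<in>Obj C.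
       Cmp C (Cmp C (nA C A d (BOb B X) (BOb B Y)) (TAr C (lam X) (lam Y))) (Mm B (TOb C A X) (TOb C A Y))
         = Cmp C (Cmp C (TAr C (Idm C A) (Mm B X Y)) (lam (TOb C X Y))) (BAr B (nA C A d X Y))) \<and>
    Cmp C (nKA C A e) (MK B)
      = Cmp C (Cmp C (TAr C (Idm C A) (MK B)) (lam (Unt C))) (BAr B (nKA C A e)) \<and>
    \<comment> \<open>extra compatibility with the associator\<close>
    (\<forall>X\<in>Obj C. \<forall>Y\<in>Obj C.
       Cmp C (Cmp C (Asc C A (BOb B X) (BOb B Y)) (TAr C (lam X) (Idm C (BOb B Y)))) (Mm B (TOb C A X) Y)
         = Cmp C (Cmp C (TAr C (Idm C A) (Mm B X Y)) (lam (TOb C X Y))) (BAr B (Asc C A X Y)))"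

end

(*
  A coaction \<omega> : A \<rightarrow> !A induces the law \<lambda>\<^sub>X = (\<omega> \<otimes> 1) ; m\<^sub>A\<^sub>,\<^sub>X, and a law \<lambda> yields the
  coaction \<rho>\<^sup>-\<^sup>1 ; (1 \<otimes> m\<^sub>K) ; \<lambda>\<^sub>K ; !\<rho>.  The two constructions are mutually inverse: the right
  unit law of m recovers any h : Y \<rightarrow> !Z from (h \<otimes> 1) ; m\<^sub>Z\<^sub>,\<^sub>K, and the compatibility of \<lambda>
  with the associator, taken at (K, X), shows that \<lambda> is induced by its coaction.  For an induced
  law every axiom of a symmetric monoidal mixed distributive law matches one condition on \<omega>: the
  \<epsilon>- and \<delta>-axioms the coalgebra laws, the \<mu>-, \<eta>-, n- and n\<^sub>K-axioms the statement that \<nabla>, u,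
  \<Delta>, e are coalgebra morphisms.  The conditions give the axioms by naturality and monoidality of
  m; conversely, the axioms at X = K give the conditions after cancelling m\<^sub>Z\<^sub>,\<^sub>K.
*)
theory Submission
  imports Defs
begin

locale sm_comonad =
  fixes C :: "('o,'a) smcat" and B :: "('o,'a) smcomonad"
  assumes smc: "is_smc C" and sm_comonad: "is_sm_comonad C B"
begin

abbreviation cmp (infixr "\<Zcomp>" 55) where "f \<Zcomp> g \<equiv> Cmp C f g"
abbreviation tar (infixr "\<otimes>" 60) where "f \<otimes> g \<equiv> TAr C f g"
abbreviation tob (infixr "\<odot>" 65) where "X \<odot> Y \<equiv> TOb C X Y"
abbreviation "Ob X \<equiv> X \<in> Obj C"
abbreviation "Ar f \<equiv> f \<in> Arr C"
abbreviation "src f \<equiv> Src C f"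
abbreviation "tgt f \<equiv> Tgt C f"
abbreviation "idm X \<equiv> Idm C X"
abbreviation "K \<equiv> Unt C"
abbreviation "asc X Y Z \<equiv> Asc C X Y Z"
abbreviation "asc_inv X Y Z \<equiv> Inv C (Asc C X Y Z)"
abbreviation "lun X \<equiv> LUn C X"
abbreviation "lun_inv X \<equiv> Inv C (LUn C X)"
abbreviation "run X \<equiv> RUn C X"
abbreviation "run_inv X \<equiv> Inv C (RUn C X)"
abbreviation "swp X Y \<equiv> Swp C X Y"
abbreviation "\<tau> P Q R S \<equiv> Tau C P Q R S"
abbreviation "bo X \<equiv> BOb B X"
abbreviation "ba f \<equiv> BAr B f"
abbreviation "\<delta> X \<equiv> Dl B X"
abbreviation "\<epsilon> X \<equiv> Ep B X"
abbreviation "mm X Y \<equiv> Mm B X Y"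
abbreviation "mK \<equiv> MK B"

section \<open>Symmetric monoidal categories\<close>

lemma hom_iff [simp]: "f \<in> Hom C X Y \<longleftrightarrow> Ar f \<and> src f = X \<and> tgt f = Y"
  unfolding Hom_def by blast

lemma category: "is_category C"
  using smc unfolding is_smc_def by (elim conjE) metis

lemma obj_src [simp]: "Ar f \<Longrightarrow> Ob (src f)" and obj_tgt [simp]: "Ar f \<Longrightarrow> Ob (tgt f)"
  using category unfolding is_category_def by blast+

lemma idm_hom [simp]: "Ob X \<Longrightarrow> Ar (idm X)" "Ob X \<Longrightarrow> src (idm X) = X" "Ob X \<Longrightarrow> tgt (idm X) = X"
  using category unfolding is_category_def by auto

lemma cmp_hom [simp]:
  assumes "Ar f" "Ar g" "tgt f = src g"
  shows "Ar (f \<Zcomp> g)" "src (f \<Zcomp> g) = src f" "tgt (f \<Zcomp> g) = tgt g"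
  using category assms unfolding is_category_def by auto

lemma cmp_assoc [simp]:
  "\<lbrakk>Ar f; Ar g; Ar h; tgt f = src g; tgt g = src h\<rbrakk> \<Longrightarrow> (f \<Zcomp> g) \<Zcomp> h = f \<Zcomp> (g \<Zcomp> h)"
  using category unfolding is_category_def by blast

lemma idm_left [simp]: "\<lbrakk>Ar f; src f = X\<rbrakk> \<Longrightarrow> idm X \<Zcomp> f = f"
  and idm_right [simp]: "\<lbrakk>Ar f; tgt f = X\<rbrakk> \<Longrightarrow> f \<Zcomp> idm X = f"
  using category unfolding is_category_def by blast+

lemma unit_obj [simp]: "Ob K"
  using smc unfolding is_smc_def by (elim conjE) metis

lemma tob_obj [simp]: "\<lbrakk>Ob X; Ob Y\<rbrakk> \<Longrightarrow> Ob (X \<odot> Y)"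
  using smc unfolding is_smc_def by (elim conjE) metis

lemma tar_hom [simp]:
  assumes "Ar f" "Ar g"
  shows "Ar (f \<otimes> g)" "src (f \<otimes> g) = src f \<odot> src g" "tgt (f \<otimes> g) = tgt f \<odot> tgt g"
proof -
  have "f \<otimes> g \<in> Hom C (src f \<odot> src g) (tgt f \<odot> tgt g)"
    using smc assms unfolding is_smc_def by (elim conjE) metis
  then show "Ar (f \<otimes> g)" "src (f \<otimes> g) = src f \<odot> src g" "tgt (f \<otimes> g) = tgt f \<odot> tgt g"
    by simp_all
qed

lemma tar_idm [simp]: "\<lbrakk>Ob X; Ob Y\<rbrakk> \<Longrightarrow> idm X \<otimes> idm Y = idm (X \<odot> Y)"
  using smc unfolding is_smc_def by (elim conjE) metis

lemma tar_cmp [simp]: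
  "\<lbrakk>Ar f; Ar g; Ar f'; Ar g'; tgt f = src g; tgt f' = src g'\<rbrakk>
    \<Longrightarrow> (f \<otimes> f') \<Zcomp> (g \<otimes> g') = (f \<Zcomp> g) \<otimes> (f' \<Zcomp> g')"
  using smc unfolding is_smc_def by simp

lemma tar_cmp_assoc [simp]:
  "\<lbrakk>Ar f; Ar g; Ar f'; Ar g'; Ar r; tgt f = src g; tgt f' = src g'; tgt g \<odot> tgt g' = src r\<rbrakk>
    \<Longrightarrow> (f \<otimes> f') \<Zcomp> ((g \<otimes> g') \<Zcomp> r) = ((f \<Zcomp> g) \<otimes> (f' \<Zcomp> g')) \<Zcomp> r"
  by (subst cmp_assoc [symmetric]) simp_all

lemma iso_Inv:
  assumes "is_iso C f"
  shows "Inv C f \<in> Hom C (tgt f) (src f) \<and> f \<Zcomp> Inv C f = idm (src f) \<and> Inv C f \<Zcomp> f = idm (tgt f)"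
proof -
  from assms obtain g where g: "g \<in> Hom C (tgt f) (src f)" "f \<Zcomp> g = idm (src f)" "g \<Zcomp> f = idm (tgt f)"
    and f: "Ar f" unfolding is_iso_def by blast
  have "g' = g" if "g' \<in> Hom C (tgt f) (src f)" "f \<Zcomp> g' = idm (src f)" "g' \<Zcomp> f = idm (tgt f)" for g'
  proof -
    have "g' = g' \<Zcomp> (f \<Zcomp> g)" using that g by simp
    also have "\<dots> = (g' \<Zcomp> f) \<Zcomp> g" using g that f by (intro cmp_assoc [symmetric]) auto
    finally show ?thesis using that g by simp
  qed
  then have "Inv C f = g"
    unfolding Inv_def using g by (intro the_equality) blast+
  with g show ?thesis by simp
qed

lemma iso_arr [simp]: "is_iso C f \<Longrightarrow> Ar f"
  unfolding is_iso_def by blast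

lemma Inv_hom [simp]:
  assumes "is_iso C f"
  shows "Ar (Inv C f)" "src (Inv C f) = tgt f" "tgt (Inv C f) = src f"
  using iso_Inv [OF assms] by simp_all

lemma Inv_inverse [simp]:
  assumes "is_iso C f"
  shows "f \<Zcomp> Inv C f = idm (src f)" "Inv C f \<Zcomp> f = idm (tgt f)"
  using iso_Inv [OF assms] by simp_all

lemma Inv_cancel_left [simp]:
  assumes "is_iso C f" "Ar r" "src r = src f"
  shows "f \<Zcomp> (Inv C f \<Zcomp> r) = r"
proof -
  have "f \<Zcomp> (Inv C f \<Zcomp> r) = (f \<Zcomp> Inv C f) \<Zcomp> r"
    by (rule cmp_assoc [symmetric]) (use assms in simp_all)
  also have "\<dots> = idm (src f) \<Zcomp> r"
    using assms(1) by (simp only: Inv_inverse)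
  also have "\<dots> = r"
    using assms(2,3) by simp
  finally show ?thesis .
qed

lemma Inv_cancel_right [simp]:
  assumes "is_iso C f" "Ar r" "src r = tgt f"
  shows "Inv C f \<Zcomp> (f \<Zcomp> r) = r"
proof -
  have "Inv C f \<Zcomp> (f \<Zcomp> r) = (Inv C f \<Zcomp> f) \<Zcomp> r"
    by (rule cmp_assoc [symmetric]) (use assms in simp_all)
  also have "\<dots> = idm (tgt f) \<Zcomp> r"
    using assms(1) by (simp only: Inv_inverse)
  also have "\<dots> = r"
    using assms(2,3) by simp
  finally show ?thesis .
qed

lemma is_iso_Inv [simp]: "is_iso C f \<Longrightarrow> is_iso C (Inv C f)"
  using iso_Inv [of f] unfolding is_iso_def by auto

lemma iso_cancel:
  assumes "is_iso C f" "Ar x" "Ar y" "src x = tgt f" "src y = tgt f" "f \<Zcomp> x = f \<Zcomp> y"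
  shows "x = y"
proof -
  have "x = Inv C f \<Zcomp> (f \<Zcomp> x)" using assms(1,2,4) by simp
  also have "\<dots> = Inv C f \<Zcomp> (f \<Zcomp> y)" by (simp only: assms(6))
  also have "\<dots> = y" using assms(1,3,5) by simp
  finally show ?thesis .
qed

lemma asc_hom [simp]:
  assumes "Ob X" "Ob Y" "Ob Z"
  shows "Ar (asc X Y Z)" "src (asc X Y Z) = X \<odot> (Y \<odot> Z)" "tgt (asc X Y Z) = (X \<odot> Y) \<odot> Z"
    and "is_iso C (asc X Y Z)"
  using smc assms unfolding is_smc_def by (elim conjE, metis hom_iff)+

lemma lun_hom [simp]:
  assumes "Ob X"
  shows "Ar (lun X)" "src (lun X) = K \<odot> X" "tgt (lun X) = X" "is_iso C (lun X)"
  using smc assms unfolding is_smc_def by (elim conjE, metis hom_iff)+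

lemma run_hom [simp]:
  assumes "Ob X"
  shows "Ar (run X)" "src (run X) = X \<odot> K" "tgt (run X) = X" "is_iso C (run X)"
  using smc assms unfolding is_smc_def by (elim conjE, metis hom_iff)+

lemma swp_hom [simp]:
  assumes "Ob X" "Ob Y"
  shows "Ar (swp X Y)" "src (swp X Y) = X \<odot> Y" "tgt (swp X Y) = Y \<odot> X"
  using smc assms unfolding is_smc_def by (elim conjE, metis hom_iff)+

lemma swp_swp [simp]: "\<lbrakk>Ob X; Ob Y\<rbrakk> \<Longrightarrow> swp X Y \<Zcomp> swp Y X = idm (X \<odot> Y)"
  using smc unfolding is_smc_def by (elim conjE) metis

lemma asc_nat:
  assumes "f \<in> Hom C X X'" "g \<in> Hom C Y Y'" "h \<in> Hom C Z Z'"
  shows "(f \<otimes> (g \<otimes> h)) \<Zcomp> asc X' Y' Z' = asc X Y Z \<Zcomp> ((f \<otimes> g) \<otimes> h)"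
proof -
  have "\<forall>f\<in>Arr C. \<forall>g\<in>Arr C. \<forall>h\<in>Arr C. (f \<otimes> (g \<otimes> h)) \<Zcomp> asc (tgt f) (tgt g) (tgt h)
      = asc (src f) (src g) (src h) \<Zcomp> ((f \<otimes> g) \<otimes> h)"
    using smc unfolding is_smc_def by (elim conjE) assumption
  from this [rule_format, of f g h] assms show ?thesis by simp
qed

lemma asc_inv_nat:
  assumes "f \<in> Hom C X X'" "g \<in> Hom C Y Y'" "h \<in> Hom C Z Z'"
  shows "((f \<otimes> g) \<otimes> h) \<Zcomp> asc_inv X' Y' Z' = asc_inv X Y Z \<Zcomp> (f \<otimes> (g \<otimes> h))"
proof -
  have [simp]: "Ob X" "Ob Y" "Ob Z" "Ob X'" "Ob Y'" "Ob Z'"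
    using assms by (metis hom_iff obj_src obj_tgt)+
  have "((f \<otimes> g) \<otimes> h) \<Zcomp> asc_inv X' Y' Z'
      = asc_inv X Y Z \<Zcomp> (asc X Y Z \<Zcomp> ((f \<otimes> g) \<otimes> h)) \<Zcomp> asc_inv X' Y' Z'"
    using assms by simp
  also have "\<dots> = asc_inv X Y Z \<Zcomp> ((f \<otimes> (g \<otimes> h)) \<Zcomp> asc X' Y' Z') \<Zcomp> asc_inv X' Y' Z'"
    by (simp only: asc_nat [OF assms])
  also have "\<dots> = asc_inv X Y Z \<Zcomp> (f \<otimes> (g \<otimes> h))"
    using assms by simp
  finally show ?thesis .
qed

lemma run_nat: "f \<in> Hom C X X' \<Longrightarrow> (f \<otimes> idm K) \<Zcomp> run X' = run X \<Zcomp> f"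
  using smc unfolding is_smc_def hom_iff by (elim conjE, hypsubst) metis

lemma swp_nat:
  assumes "f \<in> Hom C X X'" "g \<in> Hom C Y Y'"
  shows "(f \<otimes> g) \<Zcomp> swp X' Y' = swp X Y \<Zcomp> (g \<otimes> f)"
proof -
  have "\<forall>f\<in>Arr C. \<forall>g\<in>Arr C. (f \<otimes> g) \<Zcomp> swp (tgt f) (tgt g) = swp (src f) (src g) \<Zcomp> (g \<otimes> f)"
    using smc unfolding is_smc_def by (elim conjE) assumption
  from this [rule_format, of f g] assms show ?thesis by simp
qed

lemma triangle:
  assumes "Ob X" "Ob Y"
  shows "asc X K Y \<Zcomp> (run X \<otimes> idm Y) = idm X \<otimes> lun Y"
proof -
  have "\<forall>X\<in>Obj C. \<forall>Y\<in>Obj C. asc X K Y \<Zcomp> (run X \<otimes> idm Y) = idm X \<otimes> lun Y"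
    using smc unfolding is_smc_def by (elim conjE) assumption
  then show ?thesis using assms by simp
qed

lemma triangle_inv:
  assumes "Ob X" "Ob Y"
  shows "(run_inv X \<otimes> idm Y) \<Zcomp> asc_inv X K Y = idm X \<otimes> lun_inv Y"
proof -
  have "(run_inv X \<otimes> idm Y) \<Zcomp> asc_inv X K Y
      = (run_inv X \<otimes> idm Y) \<Zcomp> asc_inv X K Y \<Zcomp> (idm X \<otimes> lun Y) \<Zcomp> (idm X \<otimes> lun_inv Y)"
    using assms by simp
  also have "\<dots> = (run_inv X \<otimes> idm Y) \<Zcomp> asc_inv X K Y \<Zcomp> (asc X K Y \<Zcomp> (run X \<otimes> idm Y)) \<Zcomp> (idm X \<otimes> lun_inv Y)"
    by (simp only: triangle assms)
  also have "\<dots> = idm X \<otimes> lun_inv Y"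
    using assms by simp
  finally show ?thesis .
qed

definition swp_mid :: "'o \<Rightarrow> 'o \<Rightarrow> 'o \<Rightarrow> 'a" where
  "swp_mid X Y Z = asc X Y Z \<Zcomp> (swp X Y \<otimes> idm Z) \<Zcomp> asc_inv Y X Z"

lemma swp_mid_hom [simp]:
  assumes "Ob X" "Ob Y" "Ob Z"
  shows "Ar (swp_mid X Y Z)" "src (swp_mid X Y Z) = X \<odot> (Y \<odot> Z)" "tgt (swp_mid X Y Z) = Y \<odot> (X \<odot> Z)"
  using assms unfolding swp_mid_def by simp_all

lemma Tau_swp_mid:
  assumes "Ob P" "Ob Q" "Ob R" "Ob S"
  shows "\<tau> P Q R S = asc_inv P Q (R \<odot> S) \<Zcomp> (idm P \<otimes> swp_mid Q R S) \<Zcomp> asc P R (Q \<odot> S)"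
  using assms unfolding Tau_def swp_mid_def by simp

lemma Tau_hom [simp]:
  assumes "Ob P" "Ob Q" "Ob R" "Ob S"
  shows "Ar (\<tau> P Q R S)" "src (\<tau> P Q R S) = (P \<odot> Q) \<odot> (R \<odot> S)" "tgt (\<tau> P Q R S) = (P \<odot> R) \<odot> (Q \<odot> S)"
  using assms by (simp_all add: Tau_swp_mid)

lemma swp_mid_nat:
  assumes "f \<in> Hom C X X'" "g \<in> Hom C Y Y'" "h \<in> Hom C Z Z'"
  shows "(f \<otimes> (g \<otimes> h)) \<Zcomp> swp_mid X' Y' Z' = swp_mid X Y Z \<Zcomp> (g \<otimes> (f \<otimes> h))"
proof -
  have [simp]: "Ob X" "Ob Y" "Ob Z" "Ob X'" "Ob Y'" "Ob Z'"
    using assms by (metis hom_iff obj_src obj_tgt)+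
  have "(f \<otimes> (g \<otimes> h)) \<Zcomp> swp_mid X' Y' Z'
      = ((f \<otimes> (g \<otimes> h)) \<Zcomp> asc X' Y' Z') \<Zcomp> (swp X' Y' \<otimes> idm Z') \<Zcomp> asc_inv Y' X' Z'"
    using assms by (simp add: swp_mid_def)
  also have "\<dots> = asc X Y Z \<Zcomp> (((f \<otimes> g) \<Zcomp> swp X' Y') \<otimes> h) \<Zcomp> asc_inv Y' X' Z'"
    using assms by (simp add: asc_nat [OF assms])
  also have "\<dots> = asc X Y Z \<Zcomp> (swp X Y \<otimes> idm Z) \<Zcomp> ((g \<otimes> f) \<otimes> h) \<Zcomp> asc_inv Y' X' Z'"
    using assms by (simp add: swp_nat)
  also have "\<dots> = swp_mid X Y Z \<Zcomp> (g \<otimes> (f \<otimes> h))"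
    using assms by (simp add: asc_inv_nat swp_mid_def)
  finally show ?thesis .
qed

lemma Tau_nat:
  assumes "f \<in> Hom C P P'" "g \<in> Hom C Q Q'" "h \<in> Hom C R R'" "k \<in> Hom C S S'"
  shows "((f \<otimes> g) \<otimes> (h \<otimes> k)) \<Zcomp> \<tau> P' Q' R' S' = \<tau> P Q R S \<Zcomp> ((f \<otimes> h) \<otimes> (g \<otimes> k))"
proof -
  have [simp]: "Ob P" "Ob Q" "Ob R" "Ob S" "Ob P'" "Ob Q'" "Ob R'" "Ob S'"
    using assms by (metis hom_iff obj_src obj_tgt)+
  have "((f \<otimes> g) \<otimes> (h \<otimes> k)) \<Zcomp> \<tau> P' Q' R' S'
      = (((f \<otimes> g) \<otimes> (h \<otimes> k)) \<Zcomp> asc_inv P' Q' (R' \<odot> S')) \<Zcomp> (idm P' \<otimes> swp_mid Q' R' S') \<Zcomp> asc P' R' (Q' \<odot> S')"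
    using assms by (simp add: Tau_swp_mid)
  also have "\<dots> = asc_inv P Q (R \<odot> S) \<Zcomp> (f \<otimes> ((g \<otimes> (h \<otimes> k)) \<Zcomp> swp_mid Q' R' S')) \<Zcomp> asc P' R' (Q' \<odot> S')"
    using assms by (simp add: asc_inv_nat [of f P P' g Q Q' "h \<otimes> k" "R \<odot> S" "R' \<odot> S'"])
  also have "\<dots> = asc_inv P Q (R \<odot> S) \<Zcomp> (idm P \<otimes> swp_mid Q R S) \<Zcomp> (f \<otimes> (h \<otimes> (g \<otimes> k))) \<Zcomp> asc P' R' (Q' \<odot> S')"
    using assms by (simp add: swp_mid_nat)
  also have "\<dots> = \<tau> P Q R S \<Zcomp> ((f \<otimes> h) \<otimes> (g \<otimes> k))"
    using assms by (simp add: asc_nat [of f P P' h R R' "g \<otimes> k" "Q \<odot> S" "Q' \<odot> S'"] Tau_swp_mid)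
  finally show ?thesis .
qed

lemma Tau_Tau [simp]:
  assumes "Ob P" "Ob Q" "Ob R" "Ob S"
  shows "\<tau> P Q R S \<Zcomp> \<tau> P R Q S = idm ((P \<odot> Q) \<odot> (R \<odot> S))"
  using assms by (simp add: Tau_def)

lemma Tau_Tau_cancel [simp]:
  assumes "Ob P" "Ob Q" "Ob R" "Ob S" "Ar r" "src r = (P \<odot> Q) \<odot> (R \<odot> S)"
  shows "\<tau> P Q R S \<Zcomp> (\<tau> P R Q S \<Zcomp> r) = r"
  using assms by (subst cmp_assoc [symmetric]) simp_all

section \<open>The lax monoidal comonad\<close>

lemma bo_obj [simp]: "Ob X \<Longrightarrow> Ob (bo X)"
  using sm_comonad unfolding is_sm_comonad_def by (elim conjE) metis

lemma ba_hom [simp]: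
  assumes "Ar f"
  shows "Ar (ba f)" "src (ba f) = bo (src f)" "tgt (ba f) = bo (tgt f)"
  using sm_comonad assms unfolding is_sm_comonad_def by (elim conjE, metis hom_iff)+

lemma ba_idm [simp]: "Ob X \<Longrightarrow> ba (idm X) = idm (bo X)"
  using sm_comonad unfolding is_sm_comonad_def by (elim conjE) metis

lemma ba_cmp [simp]:
  assumes "Ar f" "Ar g" "tgt f = src g"
  shows "ba f \<Zcomp> ba g = ba (f \<Zcomp> g)"
proof -
  have "\<forall>f\<in>Arr C. \<forall>g\<in>Arr C. tgt f = src g \<longrightarrow> ba (f \<Zcomp> g) = ba f \<Zcomp> ba g"
    using sm_comonad unfolding is_sm_comonad_def by (elim conjE) assumption
  then show ?thesis using assms by simp
qed

lemma ba_cmp_assoc [simp]: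
  "\<lbrakk>Ar f; Ar g; Ar r; tgt f = src g; bo (tgt g) = src r\<rbrakk> \<Longrightarrow> ba f \<Zcomp> (ba g \<Zcomp> r) = ba (f \<Zcomp> g) \<Zcomp> r"
  by (subst cmp_assoc [symmetric]) simp_all

lemma \<delta>_hom [simp]:
  assumes "Ob X"
  shows "Ar (\<delta> X)" "src (\<delta> X) = bo X" "tgt (\<delta> X) = bo (bo X)"
  using sm_comonad assms unfolding is_sm_comonad_def by (elim conjE, metis hom_iff)+

lemma \<epsilon>_hom [simp]:
  assumes "Ob X"
  shows "Ar (\<epsilon> X)" "src (\<epsilon> X) = bo X" "tgt (\<epsilon> X) = X"
  using sm_comonad assms unfolding is_sm_comonad_def by (elim conjE, metis hom_iff)+

lemma mm_hom [simp]:
  assumes "Ob X" "Ob Y"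
  shows "Ar (mm X Y)" "src (mm X Y) = bo X \<odot> bo Y" "tgt (mm X Y) = bo (X \<odot> Y)"
  using sm_comonad assms unfolding is_sm_comonad_def by (elim conjE, metis hom_iff)+

lemma mK_hom [simp]: "Ar mK" "src mK = K" "tgt mK = bo K"
  using sm_comonad unfolding is_sm_comonad_def by (elim conjE, metis hom_iff)+

lemma \<delta>_nat: "f \<in> Hom C X X' \<Longrightarrow> ba f \<Zcomp> \<delta> X' = \<delta> X \<Zcomp> ba (ba f)"
  using sm_comonad unfolding is_sm_comonad_def hom_iff by (elim conjE, hypsubst) metis

lemma \<epsilon>_nat: "f \<in> Hom C X X' \<Longrightarrow> ba f \<Zcomp> \<epsilon> X' = \<epsilon> X \<Zcomp> f"
  using sm_comonad unfolding is_sm_comonad_def hom_iff by (elim conjE, hypsubst) metis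

lemma mm_nat:
  assumes "f \<in> Hom C X X'" "g \<in> Hom C Y Y'"
  shows "(ba f \<otimes> ba g) \<Zcomp> mm X' Y' = mm X Y \<Zcomp> ba (f \<otimes> g)"
proof -
  have "\<forall>f\<in>Arr C. \<forall>g\<in>Arr C.
      (ba f \<otimes> ba g) \<Zcomp> mm (tgt f) (tgt g) = mm (src f) (src g) \<Zcomp> ba (f \<otimes> g)"
    using sm_comonad unfolding is_sm_comonad_def by (elim conjE) assumption
  from this [rule_format, of f g] assms show ?thesis by simp
qed

lemma mm_assoc:
  assumes "Ob X" "Ob Y" "Ob Z"
  shows "(idm (bo X) \<otimes> mm Y Z) \<Zcomp> mm X (Y \<odot> Z) \<Zcomp> ba (asc X Y Z)
     = asc (bo X) (bo Y) (bo Z) \<Zcomp> (mm X Y \<otimes> idm (bo Z)) \<Zcomp> mm (X \<odot> Y) Z"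
proof -
  have "((idm (bo X) \<otimes> mm Y Z) \<Zcomp> mm X (Y \<odot> Z)) \<Zcomp> ba (asc X Y Z)
     = (asc (bo X) (bo Y) (bo Z) \<Zcomp> (mm X Y \<otimes> idm (bo Z))) \<Zcomp> mm (X \<odot> Y) Z"
    using sm_comonad assms unfolding is_sm_comonad_def by (elim conjE) metis
  with assms show ?thesis by simp
qed

lemma mm_lun:
  assumes "Ob X"
  shows "(mK \<otimes> idm (bo X)) \<Zcomp> mm K X \<Zcomp> ba (lun X) = lun (bo X)"
proof -
  have "((mK \<otimes> idm (bo X)) \<Zcomp> mm K X) \<Zcomp> ba (lun X) = lun (bo X)"
    using sm_comonad assms unfolding is_sm_comonad_def by (elim conjE) metis
  with assms show ?thesis by simp
qed

lemma mm_run: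
  assumes "Ob X"
  shows "(idm (bo X) \<otimes> mK) \<Zcomp> mm X K \<Zcomp> ba (run X) = run (bo X)"
proof -
  have "((idm (bo X) \<otimes> mK) \<Zcomp> mm X K) \<Zcomp> ba (run X) = run (bo X)"
    using sm_comonad assms unfolding is_sm_comonad_def by (elim conjE) metis
  with assms show ?thesis by simp
qed

lemma mm_swp:
  assumes "Ob X" "Ob Y"
  shows "mm X Y \<Zcomp> ba (swp X Y) = swp (bo X) (bo Y) \<Zcomp> mm Y X"
proof -
  have "\<forall>X\<in>Obj C. \<forall>Y\<in>Obj C. mm X Y \<Zcomp> ba (swp X Y) = swp (bo X) (bo Y) \<Zcomp> mm Y X"
    using sm_comonad unfolding is_sm_comonad_def by (elim conjE) assumption
  then show ?thesis using assms by simp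
qed

lemma mm_\<delta>:
  assumes "Ob X" "Ob Y"
  shows "mm X Y \<Zcomp> \<delta> (X \<odot> Y) = (\<delta> X \<otimes> \<delta> Y) \<Zcomp> mm (bo X) (bo Y) \<Zcomp> ba (mm X Y)"
proof -
  have "mm X Y \<Zcomp> \<delta> (X \<odot> Y) = ((\<delta> X \<otimes> \<delta> Y) \<Zcomp> mm (bo X) (bo Y)) \<Zcomp> ba (mm X Y)"
    using sm_comonad assms unfolding is_sm_comonad_def by (elim conjE) metis
  with assms show ?thesis by simp
qed

lemma mm_\<epsilon>: "\<lbrakk>Ob X; Ob Y\<rbrakk> \<Longrightarrow> mm X Y \<Zcomp> \<epsilon> (X \<odot> Y) = \<epsilon> X \<otimes> \<epsilon> Y"
  using sm_comonad unfolding is_sm_comonad_def by (elim conjE) metis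

lemma mK_\<delta>: "mK \<Zcomp> \<delta> K = mK \<Zcomp> ba mK"
  using sm_comonad unfolding is_sm_comonad_def by (elim conjE) metis

lemma mK_\<epsilon>: "mK \<Zcomp> \<epsilon> K = idm K"
  using sm_comonad unfolding is_sm_comonad_def by (elim conjE) metis

lemma mm_assoc_inv:
  assumes "Ob X" "Ob Y" "Ob Z"
  shows "asc_inv (bo X) (bo Y) (bo Z) \<Zcomp> (idm (bo X) \<otimes> mm Y Z) \<Zcomp> mm X (Y \<odot> Z)
       = (mm X Y \<otimes> idm (bo Z)) \<Zcomp> mm (X \<odot> Y) Z \<Zcomp> ba (asc_inv X Y Z)"
proof -
  have "asc_inv (bo X) (bo Y) (bo Z) \<Zcomp> (idm (bo X) \<otimes> mm Y Z) \<Zcomp> mm X (Y \<odot> Z)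
      = asc_inv (bo X) (bo Y) (bo Z) \<Zcomp> ((idm (bo X) \<otimes> mm Y Z) \<Zcomp> mm X (Y \<odot> Z) \<Zcomp> ba (asc X Y Z))
          \<Zcomp> ba (asc_inv X Y Z)"
    using assms by simp
  also have "\<dots> = asc_inv (bo X) (bo Y) (bo Z) \<Zcomp> (asc (bo X) (bo Y) (bo Z) \<Zcomp> (mm X Y \<otimes> idm (bo Z))
          \<Zcomp> mm (X \<odot> Y) Z) \<Zcomp> ba (asc_inv X Y Z)"
    by (simp only: mm_assoc assms)
  also have "\<dots> = (mm X Y \<otimes> idm (bo Z)) \<Zcomp> mm (X \<odot> Y) Z \<Zcomp> ba (asc_inv X Y Z)"
    using assms by simp
  finally show ?thesis .
qed

lemma mm_lun_inv:
  assumes "Ob X"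
  shows "lun_inv (bo X) \<Zcomp> (mK \<otimes> idm (bo X)) \<Zcomp> mm K X = ba (lun_inv X)"
proof -
  have "lun_inv (bo X) \<Zcomp> (mK \<otimes> idm (bo X)) \<Zcomp> mm K X
      = lun_inv (bo X) \<Zcomp> ((mK \<otimes> idm (bo X)) \<Zcomp> mm K X \<Zcomp> ba (lun X)) \<Zcomp> ba (lun_inv X)"
    using assms by simp
  also have "\<dots> = ba (lun_inv X)"
    using assms by (simp only: mm_lun) simp
  finally show ?thesis .
qed

lemma mm_swp_mid:
  assumes "Ob X" "Ob Y" "Ob Z"
  shows "(idm (bo X) \<otimes> mm Y Z) \<Zcomp> mm X (Y \<odot> Z) \<Zcomp> ba (swp_mid X Y Z)
       = swp_mid (bo X) (bo Y) (bo Z) \<Zcomp> (idm (bo Y) \<otimes> mm X Z) \<Zcomp> mm Y (X \<odot> Z)"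
proof -
  have "(idm (bo X) \<otimes> mm Y Z) \<Zcomp> mm X (Y \<odot> Z) \<Zcomp> ba (swp_mid X Y Z)
      = ((idm (bo X) \<otimes> mm Y Z) \<Zcomp> mm X (Y \<odot> Z) \<Zcomp> ba (asc X Y Z))
          \<Zcomp> ba (swp X Y \<otimes> idm Z) \<Zcomp> ba (asc_inv Y X Z)"
    using assms by (simp add: swp_mid_def)
  also have "\<dots> = asc (bo X) (bo Y) (bo Z) \<Zcomp> (mm X Y \<otimes> idm (bo Z))
          \<Zcomp> (mm (X \<odot> Y) Z \<Zcomp> ba (swp X Y \<otimes> idm Z)) \<Zcomp> ba (asc_inv Y X Z)"
    using assms by (subst mm_assoc) simp_all
  also have "\<dots> = asc (bo X) (bo Y) (bo Z) \<Zcomp> ((mm X Y \<Zcomp> ba (swp X Y)) \<otimes> idm (bo Z))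
          \<Zcomp> mm (Y \<odot> X) Z \<Zcomp> ba (asc_inv Y X Z)"
    using assms by (subst mm_nat [symmetric, of "swp X Y" "X \<odot> Y" "Y \<odot> X" "idm Z" Z Z]) simp_all
  also have "\<dots> = asc (bo X) (bo Y) (bo Z) \<Zcomp> (swp (bo X) (bo Y) \<otimes> idm (bo Z))
          \<Zcomp> ((mm Y X \<otimes> idm (bo Z)) \<Zcomp> mm (Y \<odot> X) Z \<Zcomp> ba (asc_inv Y X Z))"
    using assms by (subst mm_swp) simp_all
  also have "\<dots> = swp_mid (bo X) (bo Y) (bo Z) \<Zcomp> (idm (bo Y) \<otimes> mm X Z) \<Zcomp> mm Y (X \<odot> Z)"
    using assms by (subst mm_assoc_inv [symmetric]) (simp_all add: swp_mid_def)
  finally show ?thesis .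
qed

lemma mm_Tau:
  assumes "Ob P" "Ob Q" "Ob R" "Ob S"
  shows "\<tau> (bo P) (bo Q) (bo R) (bo S) \<Zcomp> (mm P R \<otimes> mm Q S) \<Zcomp> mm (P \<odot> R) (Q \<odot> S)
       = (mm P Q \<otimes> mm R S) \<Zcomp> mm (P \<odot> Q) (R \<odot> S) \<Zcomp> ba (\<tau> P Q R S)"
proof -
  have "(mm P Q \<otimes> mm R S) \<Zcomp> mm (P \<odot> Q) (R \<odot> S) \<Zcomp> ba (\<tau> P Q R S)
      = ((idm (bo P) \<otimes> idm (bo Q)) \<otimes> mm R S) \<Zcomp> ((mm P Q \<otimes> idm (bo (R \<odot> S))) \<Zcomp> mm (P \<odot> Q) (R \<odot> S)
          \<Zcomp> ba (asc_inv P Q (R \<odot> S))) \<Zcomp> ba (idm P \<otimes> swp_mid Q R S) \<Zcomp> ba (asc P R (Q \<odot> S))"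
    using assms by (simp add: Tau_swp_mid)
  also have "\<dots> = (((idm (bo P) \<otimes> idm (bo Q)) \<otimes> mm R S) \<Zcomp> asc_inv (bo P) (bo Q) (bo (R \<odot> S)))
          \<Zcomp> (idm (bo P) \<otimes> mm Q (R \<odot> S)) \<Zcomp> (mm P (Q \<odot> (R \<odot> S)) \<Zcomp> ba (idm P \<otimes> swp_mid Q R S))
          \<Zcomp> ba (asc P R (Q \<odot> S))"
    using assms by (subst mm_assoc_inv [symmetric]) simp_all
  also have "\<dots> = asc_inv (bo P) (bo Q) (bo R \<odot> bo S)
          \<Zcomp> (idm (bo P) \<otimes> ((idm (bo Q) \<otimes> mm R S) \<Zcomp> mm Q (R \<odot> S)))
          \<Zcomp> (mm P (Q \<odot> (R \<odot> S)) \<Zcomp> ba (idm P \<otimes> swp_mid Q R S)) \<Zcomp> ba (asc P R (Q \<odot> S))"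
    using assms
    by (subst asc_inv_nat [of "idm (bo P)" "bo P" "bo P" "idm (bo Q)" "bo Q" "bo Q" "mm R S" "bo R \<odot> bo S" "bo (R \<odot> S)"])
      simp_all
  also have "\<dots> = asc_inv (bo P) (bo Q) (bo R \<odot> bo S)
          \<Zcomp> (idm (bo P) \<otimes> ((idm (bo Q) \<otimes> mm R S) \<Zcomp> mm Q (R \<odot> S) \<Zcomp> ba (swp_mid Q R S)))
          \<Zcomp> mm P (R \<odot> (Q \<odot> S)) \<Zcomp> ba (asc P R (Q \<odot> S))"
    using assms by (subst mm_nat [symmetric, of "idm P" P P "swp_mid Q R S" "Q \<odot> (R \<odot> S)" "R \<odot> (Q \<odot> S)"]) simp_all
  also have "\<dots> = asc_inv (bo P) (bo Q) (bo R \<odot> bo S)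
          \<Zcomp> (idm (bo P) \<otimes> (swp_mid (bo Q) (bo R) (bo S) \<Zcomp> (idm (bo R) \<otimes> mm Q S) \<Zcomp> mm R (Q \<odot> S)))
          \<Zcomp> mm P (R \<odot> (Q \<odot> S)) \<Zcomp> ba (asc P R (Q \<odot> S))"
    using assms by (simp only: mm_swp_mid)
  also have "\<dots> = asc_inv (bo P) (bo Q) (bo R \<odot> bo S) \<Zcomp> (idm (bo P) \<otimes> swp_mid (bo Q) (bo R) (bo S))
          \<Zcomp> (idm (bo P) \<otimes> (idm (bo R) \<otimes> mm Q S)) \<Zcomp> asc (bo P) (bo R) (bo (Q \<odot> S))
          \<Zcomp> (mm P R \<otimes> idm (bo (Q \<odot> S))) \<Zcomp> mm (P \<odot> R) (Q \<odot> S)"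
    using assms by (subst mm_assoc [of P R "Q \<odot> S", symmetric]) simp_all
  also have "\<dots> = asc_inv (bo P) (bo Q) (bo R \<odot> bo S) \<Zcomp> (idm (bo P) \<otimes> swp_mid (bo Q) (bo R) (bo S))
          \<Zcomp> ((idm (bo P) \<otimes> (idm (bo R) \<otimes> mm Q S)) \<Zcomp> asc (bo P) (bo R) (bo (Q \<odot> S)))
          \<Zcomp> (mm P R \<otimes> idm (bo (Q \<odot> S))) \<Zcomp> mm (P \<odot> R) (Q \<odot> S)"
    using assms by simp
  also have "\<dots> = \<tau> (bo P) (bo Q) (bo R) (bo S) \<Zcomp> (mm P R \<otimes> mm Q S) \<Zcomp> mm (P \<odot> R) (Q \<odot> S)"
    using assms
    by (subst asc_nat [of "idm (bo P)" "bo P" "bo P" "idm (bo R)" "bo R" "bo R" "mm Q S" "bo Q \<odot> bo S" "bo (Q \<odot> S)"])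
      (simp_all add: Tau_swp_mid)
  finally show ?thesis by (rule sym)
qed

lemma mm_mK_retract:
  assumes "h \<in> Hom C Y (bo Z)" "Ob Z"
  shows "run_inv Y \<Zcomp> (idm Y \<otimes> mK) \<Zcomp> ((h \<otimes> idm (bo K)) \<Zcomp> mm Z K) \<Zcomp> ba (run Z) = h"
proof -
  have [simp]: "Ob Y" using assms by (metis hom_iff obj_src)
  have "run_inv Y \<Zcomp> (idm Y \<otimes> mK) \<Zcomp> ((h \<otimes> idm (bo K)) \<Zcomp> mm Z K) \<Zcomp> ba (run Z)
      = run_inv Y \<Zcomp> (h \<otimes> idm K) \<Zcomp> ((idm (bo Z) \<otimes> mK) \<Zcomp> mm Z K \<Zcomp> ba (run Z))"
    using assms by simp
  also have "\<dots> = run_inv Y \<Zcomp> ((h \<otimes> idm K) \<Zcomp> run (bo Z))"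
    using assms by (simp only: mm_run)
  also have "\<dots> = run_inv Y \<Zcomp> run Y \<Zcomp> h"
    using assms by (simp only: run_nat)
  also have "\<dots> = h"
    using assms by simp
  finally show ?thesis .
qed

lemma mm_mK_cancel:
  assumes "h \<in> Hom C Y (bo Z)" "h' \<in> Hom C Y (bo Z)" "Ob Z"
    and "(h \<otimes> idm (bo K)) \<Zcomp> mm Z K = (h' \<otimes> idm (bo K)) \<Zcomp> mm Z K"
  shows "h = h'"
proof -
  have "h = run_inv Y \<Zcomp> (idm Y \<otimes> mK) \<Zcomp> ((h \<otimes> idm (bo K)) \<Zcomp> mm Z K) \<Zcomp> ba (run Z)"
    using mm_mK_retract [OF assms(1,3)] by simp
  also have "\<dots> = run_inv Y \<Zcomp> (idm Y \<otimes> mK) \<Zcomp> ((h' \<otimes> idm (bo K)) \<Zcomp> mm Z K) \<Zcomp> ba (run Z)"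
    by (simp only: assms(4))
  also have "\<dots> = h'"
    using mm_mK_retract [OF assms(2,3)] .
  finally show ?thesis .
qed

lemma mm_mK_cancel_iso:
  assumes "is_iso C f" "tgt f = Y \<odot> bo K" "h \<in> Hom C Y (bo Z)" "h' \<in> Hom C Y (bo Z)" "Ob Z"
    and "f \<Zcomp> (h \<otimes> idm (bo K)) \<Zcomp> mm Z K = f \<Zcomp> (h' \<otimes> idm (bo K)) \<Zcomp> mm Z K"
  shows "h = h'"
proof (rule mm_mK_cancel [OF assms(3-5)])
  show "(h \<otimes> idm (bo K)) \<Zcomp> mm Z K = (h' \<otimes> idm (bo K)) \<Zcomp> mm Z K"
    by (rule iso_cancel [OF assms(1) _ _ _ _ assms(6)]) (use assms(2-5) in simp_all)
qed

lemma mm_KK_unit: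
  assumes "h \<in> Hom C Y (bo Z)" "Ob Z"
  shows "(idm Y \<otimes> (lun_inv (bo K) \<Zcomp> (mK \<otimes> idm (bo K)))) \<Zcomp> ((h \<otimes> mm K K) \<Zcomp> mm Z (K \<odot> K))
           \<Zcomp> ba (idm Z \<otimes> lun K)
       = (h \<otimes> idm (bo K)) \<Zcomp> mm Z K"
proof -
  have [simp]: "Ob Y" using assms by (metis hom_iff obj_src)
  have "(idm Y \<otimes> (lun_inv (bo K) \<Zcomp> (mK \<otimes> idm (bo K)))) \<Zcomp> ((h \<otimes> mm K K) \<Zcomp> mm Z (K \<odot> K))
          \<Zcomp> ba (idm Z \<otimes> lun K)
      = (idm Y \<otimes> (lun_inv (bo K) \<Zcomp> (mK \<otimes> idm (bo K)))) \<Zcomp> (h \<otimes> mm K K)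
          \<Zcomp> (mm Z (K \<odot> K) \<Zcomp> ba (idm Z \<otimes> lun K))"
    using assms by simp
  also have "\<dots> = (h \<otimes> (lun_inv (bo K) \<Zcomp> ((mK \<otimes> idm (bo K)) \<Zcomp> mm K K \<Zcomp> ba (lun K)))) \<Zcomp> mm Z K"
    using assms by (subst mm_nat [symmetric, of "idm Z" Z Z "lun K" "K \<odot> K" K]) simp_all
  also have "\<dots> = (h \<otimes> idm (bo K)) \<Zcomp> mm Z K"
    using assms by (simp add: mm_lun)
  finally show ?thesis .
qed

lemma mm_KK_Tau_cancel:
  assumes "h \<in> Hom C Y (bo (P \<odot> Q))" "h' \<in> Hom C Y (bo (P \<odot> Q))" "Ob P" "Ob Q"
    and "(h \<otimes> mm K K) \<Zcomp> mm (P \<odot> Q) (K \<odot> K) \<Zcomp> ba (\<tau> P Q K K)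
       = (h' \<otimes> mm K K) \<Zcomp> mm (P \<odot> Q) (K \<odot> K) \<Zcomp> ba (\<tau> P Q K K)"
  shows "h = h'"
proof (rule mm_mK_cancel [OF assms(1,2)])
  show "Ob (P \<odot> Q)" using assms(3,4) by simp
  have [simp]: "Ob Y" using assms by (metis hom_iff obj_src)
  have untwist: "(g \<otimes> mm K K) \<Zcomp> mm (P \<odot> Q) (K \<odot> K)
      = ((g \<otimes> mm K K) \<Zcomp> mm (P \<odot> Q) (K \<odot> K) \<Zcomp> ba (\<tau> P Q K K)) \<Zcomp> ba (\<tau> P K Q K)"
    if "g \<in> Hom C Y (bo (P \<odot> Q))" for g
    using that assms by simp
  have "(h \<otimes> mm K K) \<Zcomp> mm (P \<odot> Q) (K \<odot> K) = (h' \<otimes> mm K K) \<Zcomp> mm (P \<odot> Q) (K \<odot> K)"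
    by (simp only: untwist [OF assms(1)] untwist [OF assms(2)] assms(5))
  then show "(h \<otimes> idm (bo K)) \<Zcomp> mm (P \<odot> Q) K = (h' \<otimes> idm (bo K)) \<Zcomp> mm (P \<odot> Q) K"
    using assms by (simp only: mm_KK_unit [symmetric] tob_obj)
qed

text \<open>The value outside \<open>Obj C\<close> is the one demanded by \<open>is_good_lambda\<close>.\<close>
definition law_of_coaction :: "'o \<Rightarrow> 'a \<Rightarrow> 'o \<Rightarrow> 'a" where
  "law_of_coaction A w X = (if Ob X then (w \<otimes> idm (bo X)) \<Zcomp> mm A X else undefined)"

definition coaction_of_law :: "'o \<Rightarrow> ('o \<Rightarrow> 'a) \<Rightarrow> 'a" where
  "coaction_of_law A lam = run_inv A \<Zcomp> (idm A \<otimes> mK) \<Zcomp> lam K \<Zcomp> ba (run A)"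

lemma coaction_of_law_of_coaction:
  "\<lbrakk>w \<in> Hom C A (bo A); Ob A\<rbrakk> \<Longrightarrow> coaction_of_law A (law_of_coaction A w) = w"
  using mm_mK_retract [of w A A] unfolding coaction_of_law_def law_of_coaction_def by simp

end

section \<open>Laws induced by coactions\<close>

text \<open>Only the types of the structure maps \<open>\<nabla>, u, \<Delta>, e\<close> enter the correspondence.\<close>
locale bimonoid_data = sm_comonad +
  fixes A mu u d e
  assumes mu_hom: "mu \<in> Hom C (A \<odot> A) A" and u_hom: "u \<in> Hom C K A"
    and d_hom: "d \<in> Hom C A (A \<odot> A)" and e_hom: "e \<in> Hom C A K"
begin

lemma A_obj [simp]: "Ob A"
  using u_hom by (metis hom_iff obj_tgt)

lemma structure_maps_hom [simp]:
  "Ar mu" "src mu = A \<odot> A" "tgt mu = A" "Ar u" "src u = K" "tgt u = A"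
  "Ar d" "src d = A" "tgt d = A \<odot> A" "Ar e" "src e = A" "tgt e = K"
  using mu_hom u_hom d_hom e_hom by simp_all

lemma ba_etaA:
  assumes "Ob X"
  shows "ba (lun_inv X) \<Zcomp> ba (u \<otimes> idm X) = lun_inv (bo X) \<Zcomp> ((mK \<Zcomp> ba u) \<otimes> idm (bo X)) \<Zcomp> mm A X"
proof -
  have "ba (lun_inv X) \<Zcomp> ba (u \<otimes> idm X) = lun_inv (bo X) \<Zcomp> (mK \<otimes> idm (bo X)) \<Zcomp> (mm K X \<Zcomp> ba (u \<otimes> idm X))"
    using assms by (subst mm_lun_inv [symmetric]) simp_all
  also have "\<dots> = lun_inv (bo X) \<Zcomp> ((mK \<Zcomp> ba u) \<otimes> idm (bo X)) \<Zcomp> mm A X"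
    using assms by (subst mm_nat [symmetric, of u K A "idm X" X X]) simp_all
  finally show ?thesis .
qed

end

locale coaction = bimonoid_data +
  fixes w
  assumes w_hom: "w \<in> Hom C A (bo A)"
begin

lemma w_arr [simp]: "Ar w" "src w = A" "tgt w = bo A"
  using w_hom by simp_all

abbreviation \<Lambda> where "\<Lambda> X \<equiv> (w \<otimes> idm (bo X)) \<Zcomp> mm A X"

lemma \<Lambda>_natural:
  assumes "Ar f"
  shows "(idm A \<otimes> ba f) \<Zcomp> \<Lambda> (tgt f) = \<Lambda> (src f) \<Zcomp> ba (idm A \<otimes> f)"
proof -
  have "(idm A \<otimes> ba f) \<Zcomp> \<Lambda> (tgt f) = (w \<otimes> idm (bo (src f))) \<Zcomp> ((ba (idm A) \<otimes> ba f) \<Zcomp> mm A (tgt f))"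
    using assms by simp
  also have "\<dots> = \<Lambda> (src f) \<Zcomp> ba (idm A \<otimes> f)"
    using assms by (subst mm_nat [of "idm A" A A f "src f" "tgt f"]) simp_all
  finally show ?thesis .
qed

lemma \<Lambda>_\<Lambda>_asc:
  assumes "Ob X"
  shows "(idm A \<otimes> \<Lambda> X) \<Zcomp> \<Lambda> (A \<odot> X) \<Zcomp> ba (asc A A X)
       = asc A A (bo X) \<Zcomp> (((w \<otimes> w) \<Zcomp> mm A A) \<otimes> idm (bo X)) \<Zcomp> mm (A \<odot> A) X"
proof -
  have "(idm A \<otimes> \<Lambda> X) \<Zcomp> \<Lambda> (A \<odot> X) \<Zcomp> ba (asc A A X)
      = (w \<otimes> (w \<otimes> idm (bo X))) \<Zcomp> ((idm (bo A) \<otimes> mm A X) \<Zcomp> mm A (A \<odot> X) \<Zcomp> ba (asc A A X))"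
    using assms by simp
  also have "\<dots> = ((w \<otimes> (w \<otimes> idm (bo X))) \<Zcomp> asc (bo A) (bo A) (bo X)) \<Zcomp> (mm A A \<otimes> idm (bo X)) \<Zcomp> mm (A \<odot> A) X"
    using assms by (subst mm_assoc) simp_all
  also have "\<dots> = asc A A (bo X) \<Zcomp> (((w \<otimes> w) \<Zcomp> mm A A) \<otimes> idm (bo X)) \<Zcomp> mm (A \<odot> A) X"
    using assms by (subst asc_nat [of w A "bo A" w A "bo A" "idm (bo X)" "bo X" "bo X"]) simp_all
  finally show ?thesis .
qed

lemma \<Lambda>_mu_rhs:
  assumes "Ob X"
  shows "(idm A \<otimes> \<Lambda> X) \<Zcomp> \<Lambda> (A \<odot> X) \<Zcomp> ba (asc A A X \<Zcomp> (mu \<otimes> idm X))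
       = asc A A (bo X) \<Zcomp> (((w \<otimes> w) \<Zcomp> mm A A \<Zcomp> ba mu) \<otimes> idm (bo X)) \<Zcomp> mm A X"
proof -
  have "(idm A \<otimes> \<Lambda> X) \<Zcomp> \<Lambda> (A \<odot> X) \<Zcomp> ba (asc A A X \<Zcomp> (mu \<otimes> idm X))
      = ((idm A \<otimes> \<Lambda> X) \<Zcomp> \<Lambda> (A \<odot> X) \<Zcomp> ba (asc A A X)) \<Zcomp> ba (mu \<otimes> idm X)"
    using assms by simp
  also have "\<dots> = asc A A (bo X) \<Zcomp> (((w \<otimes> w) \<Zcomp> mm A A) \<otimes> idm (bo X)) \<Zcomp> (mm (A \<odot> A) X \<Zcomp> ba (mu \<otimes> idm X))"
    using assms by (subst \<Lambda>_\<Lambda>_asc) simp_all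
  also have "\<dots> = asc A A (bo X) \<Zcomp> (((w \<otimes> w) \<Zcomp> mm A A \<Zcomp> ba mu) \<otimes> idm (bo X)) \<Zcomp> mm A X"
    using assms by (subst mm_nat [symmetric, of mu "A \<odot> A" A "idm X" X X]) simp_all
  finally show ?thesis .
qed

lemma \<Lambda>_n_lhs:
  assumes "Ob X" "Ob Y"
  shows "(d \<otimes> idm (bo X \<odot> bo Y)) \<Zcomp> \<tau> A A (bo X) (bo Y) \<Zcomp> (\<Lambda> X \<otimes> \<Lambda> Y) \<Zcomp> mm (A \<odot> X) (A \<odot> Y)
       = ((d \<Zcomp> (w \<otimes> w) \<Zcomp> mm A A) \<otimes> mm X Y) \<Zcomp> mm (A \<odot> A) (X \<odot> Y) \<Zcomp> ba (\<tau> A A X Y)"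
proof -
  have "(d \<otimes> idm (bo X \<odot> bo Y)) \<Zcomp> \<tau> A A (bo X) (bo Y) \<Zcomp> (\<Lambda> X \<otimes> \<Lambda> Y) \<Zcomp> mm (A \<odot> X) (A \<odot> Y)
      = (d \<otimes> idm (bo X \<odot> bo Y)) \<Zcomp> (\<tau> A A (bo X) (bo Y) \<Zcomp> ((w \<otimes> idm (bo X)) \<otimes> (w \<otimes> idm (bo Y))))
          \<Zcomp> (mm A X \<otimes> mm A Y) \<Zcomp> mm (A \<odot> X) (A \<odot> Y)"
    using assms by simp
  also have "\<dots> = ((d \<Zcomp> (w \<otimes> w)) \<otimes> idm (bo X \<odot> bo Y))
          \<Zcomp> (\<tau> (bo A) (bo A) (bo X) (bo Y) \<Zcomp> (mm A X \<otimes> mm A Y) \<Zcomp> mm (A \<odot> X) (A \<odot> Y))"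
    using assms
    by (subst Tau_nat [symmetric, of w A "bo A" w A "bo A" "idm (bo X)" "bo X" "bo X" "idm (bo Y)" "bo Y" "bo Y"])
      simp_all
  also have "\<dots> = ((d \<Zcomp> (w \<otimes> w) \<Zcomp> mm A A) \<otimes> mm X Y) \<Zcomp> mm (A \<odot> A) (X \<odot> Y) \<Zcomp> ba (\<tau> A A X Y)"
    using assms by (subst mm_Tau) simp_all
  finally show ?thesis .
qed

lemma \<Lambda>_n_rhs:
  assumes "Ob X" "Ob Y"
  shows "(idm A \<otimes> mm X Y) \<Zcomp> \<Lambda> (X \<odot> Y) \<Zcomp> ba ((d \<otimes> idm (X \<odot> Y)) \<Zcomp> \<tau> A A X Y)
       = ((w \<Zcomp> ba d) \<otimes> mm X Y) \<Zcomp> mm (A \<odot> A) (X \<odot> Y) \<Zcomp> ba (\<tau> A A X Y)"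
proof -
  have "((w \<Zcomp> ba d) \<otimes> mm X Y) \<Zcomp> mm (A \<odot> A) (X \<odot> Y) \<Zcomp> ba (\<tau> A A X Y)
      = (w \<otimes> mm X Y) \<Zcomp> ((ba d \<otimes> ba (idm (X \<odot> Y))) \<Zcomp> mm (A \<odot> A) (X \<odot> Y)) \<Zcomp> ba (\<tau> A A X Y)"
    using assms by simp
  also have "\<dots> = (w \<otimes> mm X Y) \<Zcomp> (mm A (X \<odot> Y) \<Zcomp> ba (d \<otimes> idm (X \<odot> Y))) \<Zcomp> ba (\<tau> A A X Y)"
    using assms by (subst mm_nat [of d A "A \<odot> A" "idm (X \<odot> Y)" "X \<odot> Y" "X \<odot> Y"]) simp_all
  also have "\<dots> = (idm A \<otimes> mm X Y) \<Zcomp> \<Lambda> (X \<odot> Y) \<Zcomp> ba ((d \<otimes> idm (X \<odot> Y)) \<Zcomp> \<tau> A A X Y)"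
    using assms by simp
  finally show ?thesis by (rule sym)
qed

lemma \<Lambda>_asc:
  assumes "Ob X" "Ob Y"
  shows "asc A (bo X) (bo Y) \<Zcomp> (\<Lambda> X \<otimes> idm (bo Y)) \<Zcomp> mm (A \<odot> X) Y
       = (idm A \<otimes> mm X Y) \<Zcomp> \<Lambda> (X \<odot> Y) \<Zcomp> ba (asc A X Y)"
proof -
  have "(idm A \<otimes> mm X Y) \<Zcomp> \<Lambda> (X \<odot> Y) \<Zcomp> ba (asc A X Y)
      = (w \<otimes> idm (bo X \<odot> bo Y)) \<Zcomp> ((idm (bo A) \<otimes> mm X Y) \<Zcomp> mm A (X \<odot> Y) \<Zcomp> ba (asc A X Y))"
    using assms by simp
  also have "\<dots> = ((w \<otimes> (idm (bo X) \<otimes> idm (bo Y))) \<Zcomp> asc (bo A) (bo X) (bo Y))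
          \<Zcomp> (mm A X \<otimes> idm (bo Y)) \<Zcomp> mm (A \<odot> X) Y"
    using assms by (subst mm_assoc) simp_all
  also have "\<dots> = asc A (bo X) (bo Y) \<Zcomp> (\<Lambda> X \<otimes> idm (bo Y)) \<Zcomp> mm (A \<odot> X) Y"
    using assms
    by (subst asc_nat [of w A "bo A" "idm (bo X)" "bo X" "bo X" "idm (bo Y)" "bo Y" "bo Y"]) simp_all
  finally show ?thesis by (rule sym)
qed

end

locale EM_bimonoid = coaction +
  assumes w_counit: "w \<Zcomp> \<epsilon> A = idm A"
    and w_coassoc: "w \<Zcomp> \<delta> A = w \<Zcomp> ba w"
    and mu_coalg_mor: "mu \<Zcomp> w = (w \<otimes> w) \<Zcomp> mm A A \<Zcomp> ba mu"
    and u_coalg_mor: "u \<Zcomp> w = mK \<Zcomp> ba u"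
    and d_coalg_mor: "d \<Zcomp> (w \<otimes> w) \<Zcomp> mm A A = w \<Zcomp> ba d"
    and e_coalg_mor: "e \<Zcomp> mK = w \<Zcomp> ba e"
begin

lemma \<Lambda>_mu:
  assumes "Ob X"
  shows "asc A A (bo X) \<Zcomp> (mu \<otimes> idm (bo X)) \<Zcomp> \<Lambda> X
       = (idm A \<otimes> \<Lambda> X) \<Zcomp> \<Lambda> (A \<odot> X) \<Zcomp> ba (asc A A X \<Zcomp> (mu \<otimes> idm X))"
proof -
  have "asc A A (bo X) \<Zcomp> (mu \<otimes> idm (bo X)) \<Zcomp> \<Lambda> X
      = asc A A (bo X) \<Zcomp> (((w \<otimes> w) \<Zcomp> mm A A \<Zcomp> ba mu) \<otimes> idm (bo X)) \<Zcomp> mm A X"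
    using assms by (simp add: mu_coalg_mor)
  also have "\<dots> = (idm A \<otimes> \<Lambda> X) \<Zcomp> \<Lambda> (A \<odot> X) \<Zcomp> ba (asc A A X \<Zcomp> (mu \<otimes> idm X))"
    using assms by (rule \<Lambda>_mu_rhs [symmetric])
  finally show ?thesis .
qed

lemma \<Lambda>_eta:
  assumes "Ob X"
  shows "lun_inv (bo X) \<Zcomp> (u \<otimes> idm (bo X)) \<Zcomp> \<Lambda> X = ba (lun_inv X \<Zcomp> (u \<otimes> idm X))"
proof -
  have "lun_inv (bo X) \<Zcomp> (u \<otimes> idm (bo X)) \<Zcomp> \<Lambda> X
      = lun_inv (bo X) \<Zcomp> ((mK \<Zcomp> ba u) \<otimes> idm (bo X)) \<Zcomp> mm A X"
    using assms by (simp add: u_coalg_mor)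
  also have "\<dots> = ba (lun_inv X) \<Zcomp> ba (u \<otimes> idm X)"
    using assms by (rule ba_etaA [symmetric])
  also have "\<dots> = ba (lun_inv X \<Zcomp> (u \<otimes> idm X))"
    using assms by simp
  finally show ?thesis .
qed

lemma \<Lambda>_\<delta>:
  assumes "Ob X"
  shows "(idm A \<otimes> \<delta> X) \<Zcomp> \<Lambda> (bo X) \<Zcomp> ba (\<Lambda> X) = \<Lambda> X \<Zcomp> \<delta> (A \<odot> X)"
proof -
  have "\<Lambda> X \<Zcomp> \<delta> (A \<odot> X) = (w \<otimes> idm (bo X)) \<Zcomp> (mm A X \<Zcomp> \<delta> (A \<odot> X))"
    using assms by simp
  also have "\<dots> = ((w \<Zcomp> \<delta> A) \<otimes> \<delta> X) \<Zcomp> mm (bo A) (bo X) \<Zcomp> ba (mm A X)"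
    using assms by (simp add: mm_\<delta>)
  also have "\<dots> = (w \<otimes> \<delta> X) \<Zcomp> ((ba w \<otimes> ba (idm (bo X))) \<Zcomp> mm (bo A) (bo X)) \<Zcomp> ba (mm A X)"
    using assms by (simp add: w_coassoc)
  also have "\<dots> = (w \<otimes> \<delta> X) \<Zcomp> (mm A (bo X) \<Zcomp> ba (w \<otimes> idm (bo X))) \<Zcomp> ba (mm A X)"
    using assms by (subst mm_nat [of w A "bo A" "idm (bo X)" "bo X" "bo X"]) simp_all
  also have "\<dots> = (idm A \<otimes> \<delta> X) \<Zcomp> \<Lambda> (bo X) \<Zcomp> ba (\<Lambda> X)"
    using assms by simp
  finally show ?thesis by (rule sym)
qed

lemma \<Lambda>_\<epsilon>:
  assumes "Ob X"
  shows "\<Lambda> X \<Zcomp> \<epsilon> (A \<odot> X) = idm A \<otimes> \<epsilon> X"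
proof -
  have "\<Lambda> X \<Zcomp> \<epsilon> (A \<odot> X) = (w \<otimes> idm (bo X)) \<Zcomp> (mm A X \<Zcomp> \<epsilon> (A \<odot> X))"
    using assms by simp
  also have "\<dots> = (w \<Zcomp> \<epsilon> A) \<otimes> \<epsilon> X"
    using assms by (simp add: mm_\<epsilon>)
  finally show ?thesis
    by (simp only: w_counit)
qed

lemma \<Lambda>_n:
  assumes "Ob X" "Ob Y"
  shows "(d \<otimes> idm (bo X \<odot> bo Y)) \<Zcomp> \<tau> A A (bo X) (bo Y) \<Zcomp> (\<Lambda> X \<otimes> \<Lambda> Y) \<Zcomp> mm (A \<odot> X) (A \<odot> Y)
       = (idm A \<otimes> mm X Y) \<Zcomp> \<Lambda> (X \<odot> Y) \<Zcomp> ba ((d \<otimes> idm (X \<odot> Y)) \<Zcomp> \<tau> A A X Y)"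
  using assms by (simp only: \<Lambda>_n_lhs \<Lambda>_n_rhs d_coalg_mor)

lemma \<Lambda>_nK: "run A \<Zcomp> e \<Zcomp> mK = (idm A \<otimes> mK) \<Zcomp> \<Lambda> K \<Zcomp> ba (run A \<Zcomp> e)"
proof -
  have "(idm A \<otimes> mK) \<Zcomp> \<Lambda> K \<Zcomp> ba (run A \<Zcomp> e)
      = (w \<otimes> idm K) \<Zcomp> ((idm (bo A) \<otimes> mK) \<Zcomp> mm A K \<Zcomp> ba (run A)) \<Zcomp> ba e"
    by simp
  also have "\<dots> = ((w \<otimes> idm K) \<Zcomp> run (bo A)) \<Zcomp> ba e"
    by (simp add: mm_run)
  also have "\<dots> = run A \<Zcomp> (w \<Zcomp> ba e)"
    by (subst run_nat [of w A "bo A"]) simp_all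
  also have "\<dots> = run A \<Zcomp> e \<Zcomp> mK"
    by (simp only: e_coalg_mor)
  finally show ?thesis by (rule sym)
qed

end

section \<open>Coactions induced by laws\<close>

locale mixed_law = bimonoid_data +
  fixes lam
  assumes law_hom [simp]: "Ob X \<Longrightarrow> Ar (lam X)" "Ob X \<Longrightarrow> src (lam X) = A \<odot> bo X"
      "Ob X \<Longrightarrow> tgt (lam X) = bo (A \<odot> X)"
    and law_natural: "f \<in> Hom C X Y \<Longrightarrow> (idm A \<otimes> ba f) \<Zcomp> lam Y = lam X \<Zcomp> ba (idm A \<otimes> f)"
    and law_mu: "Ob X \<Longrightarrow> asc A A (bo X) \<Zcomp> (mu \<otimes> idm (bo X)) \<Zcomp> lam X
      = (idm A \<otimes> lam X) \<Zcomp> lam (A \<odot> X) \<Zcomp> ba (asc A A X \<Zcomp> (mu \<otimes> idm X))"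
    and law_eta: "Ob X \<Longrightarrow> lun_inv (bo X) \<Zcomp> (u \<otimes> idm (bo X)) \<Zcomp> lam X = ba (lun_inv X \<Zcomp> (u \<otimes> idm X))"
    and law_\<delta>: "Ob X \<Longrightarrow> (idm A \<otimes> \<delta> X) \<Zcomp> lam (bo X) \<Zcomp> ba (lam X) = lam X \<Zcomp> \<delta> (A \<odot> X)"
    and law_\<epsilon>: "Ob X \<Longrightarrow> lam X \<Zcomp> \<epsilon> (A \<odot> X) = idm A \<otimes> \<epsilon> X"
    and law_n: "\<lbrakk>Ob X; Ob Y\<rbrakk> \<Longrightarrow>
      (d \<otimes> idm (bo X \<odot> bo Y)) \<Zcomp> \<tau> A A (bo X) (bo Y) \<Zcomp> (lam X \<otimes> lam Y) \<Zcomp> mm (A \<odot> X) (A \<odot> Y)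
      = (idm A \<otimes> mm X Y) \<Zcomp> lam (X \<odot> Y) \<Zcomp> ba ((d \<otimes> idm (X \<odot> Y)) \<Zcomp> \<tau> A A X Y)"
    and law_nK: "run A \<Zcomp> e \<Zcomp> mK = (idm A \<otimes> mK) \<Zcomp> lam K \<Zcomp> ba (run A \<Zcomp> e)"
    and law_asc: "\<lbrakk>Ob X; Ob Y\<rbrakk> \<Longrightarrow> asc A (bo X) (bo Y) \<Zcomp> (lam X \<otimes> idm (bo Y)) \<Zcomp> mm (A \<odot> X) Y
      = (idm A \<otimes> mm X Y) \<Zcomp> lam (X \<odot> Y) \<Zcomp> ba (asc A X Y)"
begin

abbreviation \<omega> where "\<omega> \<equiv> coaction_of_law A lam"

lemma \<omega>_hom [simp]: "Ar \<omega>" "src \<omega> = A" "tgt \<omega> = bo A"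
  unfolding coaction_of_law_def by simp_all

sublocale coaction C B A mu u d e \<omega>
  by unfold_locales simp

text \<open>The compatibility with the associator forces \<open>lam\<close> to be induced by its component at \<open>K\<close>.\<close>
lemma law_eq:
  assumes "Ob X"
  shows "lam X = \<Lambda> X"
proof -
  have asc': "(lam K \<otimes> idm (bo X)) \<Zcomp> mm (A \<odot> K) X
      = asc_inv A (bo K) (bo X) \<Zcomp> (idm A \<otimes> mm K X) \<Zcomp> lam (K \<odot> X) \<Zcomp> ba (asc A K X)"
    using assms by (subst law_asc [symmetric]) simp_all
  have "(\<omega> \<otimes> idm (bo X)) \<Zcomp> mm A X
      = (run_inv A \<otimes> idm (bo X)) \<Zcomp> ((idm A \<otimes> mK) \<otimes> idm (bo X)) \<Zcomp> (lam K \<otimes> idm (bo X))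
          \<Zcomp> ((ba (run A) \<otimes> ba (idm X)) \<Zcomp> mm A X)"
    unfolding coaction_of_law_def using assms by simp
  also have "\<dots> = (run_inv A \<otimes> idm (bo X)) \<Zcomp> ((idm A \<otimes> mK) \<otimes> idm (bo X))
          \<Zcomp> ((lam K \<otimes> idm (bo X)) \<Zcomp> mm (A \<odot> K) X) \<Zcomp> ba (run A \<otimes> idm X)"
    using assms by (subst mm_nat [of "run A" "A \<odot> K" A "idm X" X X]) simp_all
  also have "\<dots> = (run_inv A \<otimes> idm (bo X)) \<Zcomp> (((idm A \<otimes> mK) \<otimes> idm (bo X)) \<Zcomp> asc_inv A (bo K) (bo X))
          \<Zcomp> (idm A \<otimes> mm K X) \<Zcomp> lam (K \<odot> X) \<Zcomp> ba (asc A K X) \<Zcomp> ba (run A \<otimes> idm X)"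
    using assms by (simp only: asc') simp
  also have "\<dots> = ((run_inv A \<otimes> idm (bo X)) \<Zcomp> asc_inv A K (bo X)) \<Zcomp> (idm A \<otimes> (mK \<otimes> idm (bo X)))
          \<Zcomp> (idm A \<otimes> mm K X) \<Zcomp> lam (K \<odot> X) \<Zcomp> ba (asc A K X \<Zcomp> (run A \<otimes> idm X))"
    using assms by (subst asc_inv_nat [of "idm A" A A mK K "bo K" "idm (bo X)" "bo X" "bo X"]) simp_all
  also have "\<dots> = (idm A \<otimes> (lun_inv (bo X) \<Zcomp> (mK \<otimes> idm (bo X)) \<Zcomp> mm K X)) \<Zcomp> lam (K \<odot> X)
          \<Zcomp> ba (idm A \<otimes> lun X)"
    using assms by (simp add: triangle_inv triangle)
  also have "\<dots> = ((idm A \<otimes> ba (lun_inv X)) \<Zcomp> lam (K \<odot> X)) \<Zcomp> ba (idm A \<otimes> lun X)"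
    using assms by (subst mm_lun_inv) simp_all
  also have "\<dots> = lam X \<Zcomp> ba (idm A \<otimes> lun_inv X) \<Zcomp> ba (idm A \<otimes> lun X)"
    using assms by (subst law_natural [of "lun_inv X" X "K \<odot> X"]) simp_all
  also have "\<dots> = lam X"
    using assms by simp
  finally show ?thesis by (rule sym)
qed

lemma \<omega>_counit: "\<omega> \<Zcomp> \<epsilon> A = idm A"
proof -
  have "\<omega> \<Zcomp> \<epsilon> A = run_inv A \<Zcomp> (idm A \<otimes> mK) \<Zcomp> lam K \<Zcomp> (ba (run A) \<Zcomp> \<epsilon> A)"
    unfolding coaction_of_law_def by simp
  also have "\<dots> = run_inv A \<Zcomp> (idm A \<otimes> mK) \<Zcomp> (lam K \<Zcomp> \<epsilon> (A \<odot> K)) \<Zcomp> run A"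
    by (subst \<epsilon>_nat [of "run A" "A \<odot> K" A]) simp_all
  also have "\<dots> = run_inv A \<Zcomp> (idm A \<otimes> (mK \<Zcomp> \<epsilon> K)) \<Zcomp> run A"
    by (subst law_\<epsilon>) simp_all
  also have "\<dots> = idm A"
    by (simp add: mK_\<epsilon>)
  finally show ?thesis .
qed

lemma \<omega>_coassoc: "\<omega> \<Zcomp> \<delta> A = \<omega> \<Zcomp> ba \<omega>"
proof -
  have "\<omega> \<Zcomp> \<delta> A = run_inv A \<Zcomp> (idm A \<otimes> mK) \<Zcomp> lam K \<Zcomp> (ba (run A) \<Zcomp> \<delta> A)"
    unfolding coaction_of_law_def by simp
  also have "\<dots> = run_inv A \<Zcomp> (idm A \<otimes> mK) \<Zcomp> (lam K \<Zcomp> \<delta> (A \<odot> K)) \<Zcomp> ba (ba (run A))"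
    by (subst \<delta>_nat [of "run A" "A \<odot> K" A]) simp_all
  also have "\<dots> = run_inv A \<Zcomp> (idm A \<otimes> (mK \<Zcomp> \<delta> K)) \<Zcomp> lam (bo K) \<Zcomp> ba (lam K) \<Zcomp> ba (ba (run A))"
    by (subst law_\<delta> [symmetric]) simp_all
  also have "\<dots> = run_inv A \<Zcomp> (idm A \<otimes> mK) \<Zcomp> ((idm A \<otimes> ba mK) \<Zcomp> lam (bo K)) \<Zcomp> ba (lam K) \<Zcomp> ba (ba (run A))"
    by (subst mK_\<delta>) simp_all
  also have "\<dots> = run_inv A \<Zcomp> (idm A \<otimes> mK) \<Zcomp> (lam K \<Zcomp> ba (idm A \<otimes> mK)) \<Zcomp> ba (lam K) \<Zcomp> ba (ba (run A))"
    by (subst law_natural [of mK K "bo K"]) simp_all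
  also have "\<dots> = \<omega> \<Zcomp> ba \<omega>"
    unfolding coaction_of_law_def by simp
  finally show ?thesis .
qed

lemma e_coalg_mor: "e \<Zcomp> mK = \<omega> \<Zcomp> ba e"
proof -
  have "\<omega> \<Zcomp> ba e = run_inv A \<Zcomp> ((idm A \<otimes> mK) \<Zcomp> lam K \<Zcomp> ba (run A \<Zcomp> e))"
    unfolding coaction_of_law_def by simp
  also have "\<dots> = e \<Zcomp> mK"
    by (simp flip: law_nK)
  finally show ?thesis by (rule sym)
qed

lemma u_coalg_mor: "u \<Zcomp> \<omega> = mK \<Zcomp> ba u"
proof (rule mm_mK_cancel_iso [where f = "lun_inv (bo K)" and Y = K and Z = A])
  have "lun_inv (bo K) \<Zcomp> ((u \<Zcomp> \<omega>) \<otimes> idm (bo K)) \<Zcomp> mm A K = lun_inv (bo K) \<Zcomp> (u \<otimes> idm (bo K)) \<Zcomp> lam K"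
    by (simp add: law_eq)
  also have "\<dots> = ba (lun_inv K) \<Zcomp> ba (u \<otimes> idm K)"
    by (simp add: law_eta)
  also have "\<dots> = lun_inv (bo K) \<Zcomp> ((mK \<Zcomp> ba u) \<otimes> idm (bo K)) \<Zcomp> mm A K"
    by (rule ba_etaA) simp
  finally show "lun_inv (bo K) \<Zcomp> ((u \<Zcomp> \<omega>) \<otimes> idm (bo K)) \<Zcomp> mm A K
      = lun_inv (bo K) \<Zcomp> ((mK \<Zcomp> ba u) \<otimes> idm (bo K)) \<Zcomp> mm A K" .
qed simp_all

lemma mu_coalg_mor: "mu \<Zcomp> \<omega> = (\<omega> \<otimes> \<omega>) \<Zcomp> mm A A \<Zcomp> ba mu"
proof (rule mm_mK_cancel_iso [where f = "asc A A (bo K)" and Y = "A \<odot> A" and Z = A])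
  have "asc A A (bo K) \<Zcomp> ((mu \<Zcomp> \<omega>) \<otimes> idm (bo K)) \<Zcomp> mm A K = asc A A (bo K) \<Zcomp> (mu \<otimes> idm (bo K)) \<Zcomp> lam K"
    by (simp add: law_eq)
  also have "\<dots> = (idm A \<otimes> lam K) \<Zcomp> lam (A \<odot> K) \<Zcomp> ba (asc A A K \<Zcomp> (mu \<otimes> idm K))"
    by (simp add: law_mu)
  also have "\<dots> = (idm A \<otimes> \<Lambda> K) \<Zcomp> \<Lambda> (A \<odot> K) \<Zcomp> ba (asc A A K \<Zcomp> (mu \<otimes> idm K))"
    by (simp only: law_eq unit_obj A_obj tob_obj)
  also have "\<dots> = asc A A (bo K) \<Zcomp> (((\<omega> \<otimes> \<omega>) \<Zcomp> mm A A \<Zcomp> ba mu) \<otimes> idm (bo K)) \<Zcomp> mm A K"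
    by (rule \<Lambda>_mu_rhs) simp
  finally show "asc A A (bo K) \<Zcomp> ((mu \<Zcomp> \<omega>) \<otimes> idm (bo K)) \<Zcomp> mm A K
      = asc A A (bo K) \<Zcomp> (((\<omega> \<otimes> \<omega>) \<Zcomp> mm A A \<Zcomp> ba mu) \<otimes> idm (bo K)) \<Zcomp> mm A K" .
qed simp_all

lemma d_coalg_mor: "d \<Zcomp> (\<omega> \<otimes> \<omega>) \<Zcomp> mm A A = \<omega> \<Zcomp> ba d"
proof (rule mm_KK_Tau_cancel [where Y = A and P = A and Q = A])
  have "((d \<Zcomp> (\<omega> \<otimes> \<omega>) \<Zcomp> mm A A) \<otimes> mm K K) \<Zcomp> mm (A \<odot> A) (K \<odot> K) \<Zcomp> ba (\<tau> A A K K)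
      = (d \<otimes> idm (bo K \<odot> bo K)) \<Zcomp> \<tau> A A (bo K) (bo K) \<Zcomp> (\<Lambda> K \<otimes> \<Lambda> K) \<Zcomp> mm (A \<odot> K) (A \<odot> K)"
    by (rule \<Lambda>_n_lhs [symmetric]) simp_all
  also have "\<dots> = (d \<otimes> idm (bo K \<odot> bo K)) \<Zcomp> \<tau> A A (bo K) (bo K) \<Zcomp> (lam K \<otimes> lam K) \<Zcomp> mm (A \<odot> K) (A \<odot> K)"
    by (simp only: law_eq unit_obj)
  also have "\<dots> = (idm A \<otimes> mm K K) \<Zcomp> lam (K \<odot> K) \<Zcomp> ba ((d \<otimes> idm (K \<odot> K)) \<Zcomp> \<tau> A A K K)"
    by (simp only: law_n unit_obj)
  also have "\<dots> = (idm A \<otimes> mm K K) \<Zcomp> \<Lambda> (K \<odot> K) \<Zcomp> ba ((d \<otimes> idm (K \<odot> K)) \<Zcomp> \<tau> A A K K)"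
    by (simp only: law_eq unit_obj tob_obj)
  also have "\<dots> = ((\<omega> \<Zcomp> ba d) \<otimes> mm K K) \<Zcomp> mm (A \<odot> A) (K \<odot> K) \<Zcomp> ba (\<tau> A A K K)"
    by (rule \<Lambda>_n_rhs) simp_all
  finally show "((d \<Zcomp> (\<omega> \<otimes> \<omega>) \<Zcomp> mm A A) \<otimes> mm K K) \<Zcomp> mm (A \<odot> A) (K \<odot> K) \<Zcomp> ba (\<tau> A A K K)
      = ((\<omega> \<Zcomp> ba d) \<otimes> mm K K) \<Zcomp> mm (A \<odot> A) (K \<odot> K) \<Zcomp> ba (\<tau> A A K K)" .
qed simp_all

end

context bimonoid_data
begin

lemma is_good_lambda_law_of_coaction:
  assumes "is_EM_cocomm_bimonoid C B A w mu u d e"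
  shows "is_good_lambda C B A mu u d e (law_of_coaction A w)"
proof -
  interpret EM_bimonoid C B A mu u d e w
    using assms unfolding is_EM_cocomm_bimonoid_def is_coalg_def is_coalg_mor_def tcoalg_def
    by unfold_locales simp_all
  show ?thesis
    unfolding is_good_lambda_def
    apply (intro conjI ballI allI impI)
    subgoal by (simp add: law_of_coaction_def)
    subgoal by (simp add: law_of_coaction_def)
    subgoal for f using \<Lambda>_natural [of f] by (simp add: law_of_coaction_def)
    subgoal for X using \<Lambda>_mu [of X] by (simp add: law_of_coaction_def muA_def)
    subgoal for X using \<Lambda>_eta [of X] by (simp add: law_of_coaction_def etaA_def)
    subgoal for X using \<Lambda>_\<delta> [of X] by (simp add: law_of_coaction_def)
    subgoal for X using \<Lambda>_\<epsilon> [of X] by (simp add: law_of_coaction_def)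
    subgoal for X Y using \<Lambda>_n [of X Y] by (simp add: law_of_coaction_def nA_def)
    subgoal using \<Lambda>_nK by (simp add: law_of_coaction_def nKA_def)
    subgoal for X Y using \<Lambda>_asc [of X Y] by (simp add: law_of_coaction_def)
    done
qed

lemma mixed_law_if_good_lambda:
  assumes "is_good_lambda C B A mu u d e lam"
  shows "mixed_law C B A mu u d e lam"
proof -
  note good = assms [unfolded is_good_lambda_def muA_def etaA_def nA_def nKA_def]
  have hom: "lam X \<in> Hom C (A \<odot> bo X) (bo (A \<odot> X))" if "Ob X" for X
    using good that by blast
  show ?thesis
    apply unfold_locales
    subgoal for X using hom [of X] by simp
    subgoal for X using hom [of X] by simp
    subgoal for X using hom [of X] by simp
    subgoal for f X Y using good by auto
    subgoal for X using good hom [of X] hom [of "A \<odot> X"] by auto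
    subgoal for X using good hom [of X] by auto
    subgoal for X using good hom [of X] hom [of "bo X"] by auto
    subgoal for X using good hom [of X] by auto
    subgoal for X Y using good hom [of X] hom [of Y] hom [of "X \<odot> Y"] by auto
    subgoal using good hom [of K] by auto
    subgoal for X Y using good hom [of X] hom [of "X \<odot> Y"] by auto
    done
qed

lemma is_EM_coaction_of_law:
  assumes "is_cocomm_bimonoid C A mu u d e" "is_good_lambda C B A mu u d e lam"
  shows "is_EM_cocomm_bimonoid C B A (coaction_of_law A lam) mu u d e"
proof -
  interpret mixed_law C B A mu u d e lam
    using assms(2) by (rule mixed_law_if_good_lambda)
  show ?thesis
    unfolding is_EM_cocomm_bimonoid_def is_coalg_def is_coalg_mor_def tcoalg_def
    using assms(1) \<omega>_counit \<omega>_coassoc mu_coalg_mor u_coalg_mor d_coalg_mor e_coalg_mor by simp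
qed

lemma law_of_coaction_of_law:
  assumes "is_good_lambda C B A mu u d e lam"
  shows "law_of_coaction A (coaction_of_law A lam) = lam"
proof
  fix X
  interpret mixed_law C B A mu u d e lam
    using assms by (rule mixed_law_if_good_lambda)
  show "law_of_coaction A (coaction_of_law A lam) X = lam X"
    using assms law_eq unfolding law_of_coaction_def is_good_lambda_def by auto
qed

lemma coaction_of_law_of_EM:
  assumes "is_EM_cocomm_bimonoid C B A w mu u d e"
  shows "coaction_of_law A (law_of_coaction A w) = w"
  by (rule coaction_of_law_of_coaction)
    (use assms in \<open>simp_all add: is_EM_cocomm_bimonoid_def is_coalg_def\<close>)

end

theorem proposition5p7:
  fixes C :: "('o,'a) smcat" and B :: "('o,'a) smcomonad"
    and A :: 'o and mu u d e :: 'a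
  assumes "is_smc C" and "is_sm_comonad C B"
    and "is_cocomm_bimonoid C A mu u d e"
  shows "\<exists>F. bij_betw F {w. is_EM_cocomm_bimonoid C B A w mu u d e}
                         {lam. is_good_lambda C B A mu u d e lam}"
proof -
  interpret bimonoid_data C B A mu u d e
    using assms unfolding is_cocomm_bimonoid_def is_bimonoid_def
    by unfold_locales blast+
  have "bij_betw (law_of_coaction A) {w. is_EM_cocomm_bimonoid C B A w mu u d e}
                                    {lam. is_good_lambda C B A mu u d e lam}"
    by (rule bij_betw_byWitness [where f' = "coaction_of_law A"])
      (auto simp: coaction_of_law_of_EM law_of_coaction_of_law is_good_lambda_law_of_coaction
        is_EM_coaction_of_law [OF assms(3)])
  then show ?thesis by blast
qed

end
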